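(* Consider the linear model $\mathbf{y}=\mathbf{X}\boldsymbol\beta_0+\boldsymbol\varepsilon$, where $\mathbf{X}=(\mathbf{x}_1,\dots,\mathbf{x}_p)$ is a deterministic $n\times p$ design matrix with $\|\mathbf{x}_j\|_2=n^{1/2}$ for all $j$, $\boldsymbol\beta_0\in\mathbb{R}^p$ is the true coefficient vector with $s=\|\boldsymbol\beta_0\|_0$, and $\boldsymbol\varepsilon\sim N(\mathbf{0},\sigma^2I_n)$ for some $\sigma>0$. Let $\widetilde p=n\vee p$. Fix a constant $c>0$ and let $M=\mathrm{rspark}_c(\mathbf{X})$ be the robust spark of $\mathbf{X}$ with bound $c$. Assume (in an asymptotic regime $n\to\infty$) that $s<M/2$, $s=o(n)$, and $$b_0:=\min_{j\in\mathrm{supp}(\boldsymbol\beta_0)}|\beta_{0,j}|>\left(\sqrt{16/c^2}\vee1\right)c^{-1}c_2\sqrt{(2s+1)(\log\widetilde p)/n}$$ for some constant $c_2\ge\sqrt{10}\,\sigma$. Suppose the regularization parameter satisfies $$c^{-1}c_2\sqrt{(2s+1)(\log\widetilde p)/n}<\lambda<b_0\left(1\wedge\sqrt{c^2/2}\right).$$ Let $p_\lambda$ be either the hard-thresholding penalty $p_{H,\lambda}(t)=\tfrac12[\lambda^2-(\lambda-t)_+^2]$ or the $L_0$-penalty $p_{H_0,\lambda}(t)=\tfrac12\lambda^21_{\{t\ne0\}}$ ($t\ge0$), and let $$\hat{\boldsymbol\beta}=\arg\min_{\boldsymbol\beta\in\mathbb{S}_{M/2}}Q(\boldsymbol\beta),\qquad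 Q(\boldsymbol\beta)=(2n)^{-1}\|\mathbf{y}-\mathbf{X}\boldsymbol\beta\|_2^2+\sum_{j=1}^p p_\lambda(|\beta_j|),$$ where $\mathbb{S}_{M/2}=\{\boldsymbol\beta\in\mathbb{R}^p:\|\boldsymbol\beta\|_0<M/2\}$. Then, for both penalties, with probability at least $$1-(2/\pi)^{1/2}c_2^{-1}\sigma(\log\widetilde p)^{-1/2}\widetilde p^{\,1-c_2^2/(2\sigma^2)}-(2/\pi)^{1/2}c_2'^{-1}\sigma s(\log n)^{-1/2}n^{-c_2'^2/(2\sigma^2)}$$ for some positive constant $c_2'\ge\sqrt2\,\sigma$, the following hold simultaneously: (a) $\mathrm{supp}(\hat{\boldsymbol\beta})=\mathrm{supp}(\boldsymbol\beta_0)$; (b) $n^{-1/2}\|\mathbf{X}(\hat{\boldsymbol\beta}-\boldsymbol\beta_0)\|_2\le 2c_2'c^{-1}\sqrt{s(\log n)/n}$; (c) $\|\hat{\boldsymbol\beta}-\boldsymbol\beta_0\|_q\le 2c^{-2}c_2's^{1/q}\sqrt{(\log n)/n}$ for all $q\in[1,2]$, and $\|\hat{\boldsymbol\beta}-\boldsymbol\beta_0\|_\infty\le 2c^{-2}c_2's^{1/2}\sqrt{(\log n)/n}$.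
   Context: Robust spark: for an $n\times p$ matrix $\mathbf{X}$ and $c>0$, $\mathrm{rspark}_c(\mathbf{X})$ is the smallest number $\tau$ such that there exists a subgroup of $\tau$ columns of $n^{-1/2}\mathbf{X}$ whose corresponding submatrix has a singular value less than $c$; equivalently, it is the largest $\tau$ with $\min_{\|\boldsymbol\delta\|_0<\tau,\ \|\boldsymbol\delta\|_2=1}n^{-1/2}\|\mathbf{X}\boldsymbol\delta\|_2\ge c$. $\mathrm{supp}(\boldsymbol\beta)=\{j:\beta_j\ne0\}$, $\|\boldsymbol\beta\|_0=|\mathrm{supp}(\boldsymbol\beta)|$, $a\vee b=\max(a,b)$, $a\wedge b=\min(a,b)$, $(x)_+=\max(x,0)$. $\hat{\boldsymbol\beta}$ denotes a global minimizer of $Q$ over $\mathbb{S}_{M/2}$. *)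

theory Defs
  imports "HOL-Probability.Probability" "HOL-Library.Landau_Symbols"
begin

text \<open>Matrices are n x p arrays \<open>X i j\<close> (i < n, j < p); vectors are functions nat => real
  whose relevant entries are indexed by {..<n} or {..<p}.\<close>

definition mat_vec :: "nat \<Rightarrow> (nat \<Rightarrow> nat \<Rightarrow> real) \<Rightarrow> (nat \<Rightarrow> real) \<Rightarrow> (nat \<Rightarrow> real)" where
  "mat_vec p X \<beta> = (\<lambda>i. \<Sum>j<p. X i j * \<beta> j)"

definition norm2 :: "nat \<Rightarrow> (nat \<Rightarrow> real) \<Rightarrow> real" where
  "norm2 m v = sqrt (\<Sum>i<m. (v i)\<^sup>2)"

definition normq :: "real \<Rightarrow> nat \<Rightarrow> (nat \<Rightarrow> real) \<Rightarrow> real" where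
  "normq q m v = (\<Sum>i<m. \<bar>v i\<bar> powr q) powr (1 / q)"

definition supp :: "nat \<Rightarrow> (nat \<Rightarrow> real) \<Rightarrow> nat set" where
  "supp p \<beta> = {j. j < p \<and> \<beta> j \<noteq> 0}"

definition l0 :: "nat \<Rightarrow> (nat \<Rightarrow> real) \<Rightarrow> nat" where
  "l0 p \<beta> = card (supp p \<beta>)"

text \<open>A set of \<open>\<tau>\<close> columns of \<open>n^{-1/2} X\<close> whose submatrix has a singular value below c:
  some unit vector supported on those columns is mapped to norm below c.\<close>
definition bad_cols :: "real \<Rightarrow> nat \<Rightarrow> nat \<Rightarrow> (nat \<Rightarrow> nat \<Rightarrow> real) \<Rightarrow> nat \<Rightarrow> bool" where
  "bad_cols c n p X \<tau> \<longleftrightarrow> (\<exists>S. S \<subseteq> {..<p} \<and> card S = \<tau> \<and>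
      (\<exists>\<delta>. (\<forall>j. j \<notin> S \<longrightarrow> \<delta> j = 0) \<and> norm2 p \<delta> = 1 \<and>
           norm2 n (mat_vec p X \<delta>) / sqrt (real n) < c))"

text \<open>Robust spark; if no such column group exists the value is p+1 (i.e. "infinite").\<close>
definition rspark :: "real \<Rightarrow> nat \<Rightarrow> nat \<Rightarrow> (nat \<Rightarrow> nat \<Rightarrow> real) \<Rightarrow> nat" where
  "rspark c n p X = (if \<exists>\<tau>. bad_cols c n p X \<tau> then LEAST \<tau>. bad_cols c n p X \<tau> else p + 1)"

definition pen_H :: "real \<Rightarrow> real \<Rightarrow> real" where
  "pen_H lam t = (lam\<^sup>2 - (max (lam - t) 0)\<^sup>2) / 2"

definition pen_H0 :: "real \<Rightarrow> real \<Rightarrow> real" where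
  "pen_H0 lam t = (if t \<noteq> 0 then lam\<^sup>2 / 2 else 0)"

definition Qobj :: "(real \<Rightarrow> real \<Rightarrow> real) \<Rightarrow> real \<Rightarrow> nat \<Rightarrow> nat \<Rightarrow> (nat \<Rightarrow> nat \<Rightarrow> real)
    \<Rightarrow> (nat \<Rightarrow> real) \<Rightarrow> (nat \<Rightarrow> real) \<Rightarrow> real" where
  "Qobj pen lam n p X y \<beta> =
     (norm2 n (\<lambda>i. y i - mat_vec p X \<beta> i))\<^sup>2 / (2 * real n) + (\<Sum>j<p. pen lam \<bar>\<beta> j\<bar>)"

definition S_set :: "nat \<Rightarrow> nat \<Rightarrow> (nat \<Rightarrow> real) set" where
  "S_set p M = {\<beta>. real (l0 p \<beta>) < real M / 2}"

definition is_global_min :: "(real \<Rightarrow> real \<Rightarrow> real) \<Rightarrow> real \<Rightarrow> nat \<Rightarrow> nat \<Rightarrow> nat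
    \<Rightarrow> (nat \<Rightarrow> nat \<Rightarrow> real) \<Rightarrow> (nat \<Rightarrow> real) \<Rightarrow> (nat \<Rightarrow> real) \<Rightarrow> bool" where
  "is_global_min pen lam n p M X y b \<longleftrightarrow>
     b \<in> S_set p M \<and> (\<forall>\<beta>\<in>S_set p M. Qobj pen lam n p X y b \<le> Qobj pen lam n p X y \<beta>)"

definition noise :: "real \<Rightarrow> nat \<Rightarrow> (nat \<Rightarrow> real) measure" where
  "noise \<sigma> n = PiM {..<n} (\<lambda>_. density lborel (normal_density 0 \<sigma>))"

end

theory Submission
  imports Defs
begin

text \<open>
  Outside an event of small probability, every column correlation |x_j' eps| / n is at most
  lam0 = c2 sqrt (log p~ / n), and those on the true support are at most
  lam1 = c2' sqrt (log n / n): each correlation is Gaussian with variance sigma^2 / n, so a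
  Mills-ratio tail bound and a union bound suffice. On that event the argument is
  deterministic. Both penalties charge exactly lam^2/2 per nonzero coordinate of a global
  minimiser (for hard thresholding because its nonzero entries have modulus at least lam), so
  Q(beta^) <= Q(beta0) becomes a basic inequality trading prediction error against the
  difference of the support sizes. As beta^ - beta0 has fewer than M nonzero entries, the robust
  spark gives |X delta| / sqrt n >= c |delta|; then each false positive costs more penalty than it
  can gain in fit, and each false negative loses more fit than the penalty it saves (beta-min
  condition). Hence the supports agree, and the basic inequality restricted to that support
  yields the prediction and estimation bounds.
\<close>

lemma normal_density_tendsto_0:
  assumes "\<tau> > 0"
  shows "((\<lambda>x. normal_density 0 \<tau> x) \<longlongrightarrow> 0) at_top"
proof -
  have "((\<lambda>x::real. exp (- (x\<^sup>2 / (2 * \<tau>\<^sup>2)))) \<longlongrightarrow> 0) at_top"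
  proof -
    have "filterlim (\<lambda>x::real. (1 / (2 * \<tau>\<^sup>2)) * x\<^sup>2) at_top at_top"
      by (rule filterlim_tendsto_pos_mult_at_top[OF tendsto_const])
         (use assms in \<open>auto intro!: filterlim_pow_at_top filterlim_ident\<close>)
    then have "filterlim (\<lambda>x::real. x\<^sup>2 / (2 * \<tau>\<^sup>2)) at_top at_top" by simp
    then show ?thesis
      by (intro filterlim_compose[OF exp_at_bot] filterlim_compose[OF filterlim_uminus_at_bot_at_top])
  qed
  then have "((\<lambda>x::real. 1 / sqrt (2 * pi * \<tau>\<^sup>2) * exp (- (x\<^sup>2 / (2 * \<tau>\<^sup>2)))) \<longlongrightarrow> 1 / sqrt (2 * pi * \<tau>\<^sup>2) * 0) at_top"
    by (intro tendsto_mult tendsto_const)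
  then show ?thesis by (simp add: normal_density_def)
qed

text \<open>Mills' ratio: on \<open>x > t\<close> the density is at most \<open>x/t\<close> times itself, and \<open>x \<phi>(x)\<close> has the
  antiderivative \<open>-\<tau>\<^sup>2 \<phi>(x)\<close>.\<close>

lemma nn_integral_normal_density_upper_tail:
  assumes tau: "\<tau> > 0" and t: "t > 0"
  shows "(\<integral>\<^sup>+x. ennreal (normal_density 0 \<tau> x) * indicator {t<..} x \<partial>lborel)
     \<le> ennreal (\<tau> / (t * sqrt (2 * pi)) * exp (- t\<^sup>2 / (2 * \<tau>\<^sup>2)))"
proof -
  let ?F = "\<lambda>x. - (\<tau>\<^sup>2 / t) * normal_density 0 \<tau> x"
  have "(\<integral>\<^sup>+x. ennreal (normal_density 0 \<tau> x) * indicator {t<..} x \<partial>lborel)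
     \<le> (\<integral>\<^sup>+x. ennreal (x / t * normal_density 0 \<tau> x) * indicator {t..} x \<partial>lborel)"
  proof (intro nn_integral_mono)
    fix x :: real
    show "ennreal (normal_density 0 \<tau> x) * indicator {t<..} x \<le> ennreal (x / t * normal_density 0 \<tau> x) * indicator {t..} x"
    proof (cases "t < x")
      case True
      have "0 \<le> normal_density 0 \<tau> x" by simp
      then have "normal_density 0 \<tau> x \<le> x / t * normal_density 0 \<tau> x"
        using mult_right_mono[of 1 "x/t" "normal_density 0 \<tau> x"] True t by simp
      then show ?thesis using True by (auto simp: indicator_def intro: ennreal_leI)
    qed auto
  qed
  also have "\<dots> = ennreal (0 - ?F t)"
  proof (rule nn_integral_FTC_atLeast[where F="?F"])
    show "(\<lambda>x. x / t * normal_density 0 \<tau> x) \<in> borel_measurable borel" by measurable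
    show "\<And>x. t \<le> x \<Longrightarrow> 0 \<le> x / t * normal_density 0 \<tau> x" using t by auto
    show "(?F \<longlongrightarrow> 0) at_top"
      using tendsto_mult[OF tendsto_const normal_density_tendsto_0[OF tau], of "- (\<tau>\<^sup>2 / t)"] by simp
    fix x :: real
    show "DERIV ?F x :> x / t * normal_density 0 \<tau> x"
      unfolding normal_density_def
      apply (rule DERIV_cong)
       apply (insert tau)
       apply (rule derivative_eq_intros refl | simp)+
      using tau t by (simp add: field_simps power2_eq_square power4_eq_xxxx)
  qed
  also have "0 - ?F t = \<tau> / (t * sqrt (2 * pi)) * exp (- t\<^sup>2 / (2 * \<tau>\<^sup>2))"
    using tau t by (simp add: normal_density_def real_sqrt_mult field_simps power2_eq_square)
  finally show ?thesis .
qed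

lemma prob_space_noise: "prob_space (noise \<sigma> n)" if "\<sigma> > 0"
  unfolding noise_def using that
  by (intro prob_space_PiM prob_space_normal_density) auto

lemma distr_noise_component:
  assumes "\<sigma> > 0" "i < n" "sets N = sets borel"
  shows "distr (noise \<sigma> n) N (\<lambda>\<omega>. \<omega> i) = density lborel (normal_density 0 \<sigma>)"
proof -
  have "distr (noise \<sigma> n) N (\<lambda>\<omega>. \<omega> i) = distr (noise \<sigma> n) (density lborel (normal_density 0 \<sigma>)) (\<lambda>\<omega>. \<omega> i)"
    by (rule distr_cong) (auto simp: assms)
  also have "\<dots> = density lborel (normal_density 0 \<sigma>)"
    unfolding noise_def using assms
    by (intro distr_PiM_component prob_space_normal_density) auto
  finally show ?thesis .
qed

lemma measurable_noise_component:
  assumes "i < n" "sets N = sets borel"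
  shows "(\<lambda>\<omega>. \<omega> i) \<in> measurable (noise \<sigma> n) N"
proof -
  have "(\<lambda>\<omega>. \<omega> i) \<in> measurable (noise \<sigma> n) (density lborel (normal_density 0 \<sigma>))"
    unfolding noise_def using assms by (intro measurable_component_singleton) auto
  moreover have "measurable (noise \<sigma> n) (density lborel (normal_density 0 \<sigma>)) = measurable (noise \<sigma> n) N"
    by (rule measurable_cong_sets) (auto simp: assms)
  ultimately show ?thesis by simp
qed

lemma indep_vars_noise:
  assumes "\<sigma> > 0" "n > 0"
  shows "prob_space.indep_vars (noise \<sigma> n) (\<lambda>_. borel) (\<lambda>i \<omega>. \<omega> i) {..<n}"
proof -
  interpret P: prob_space "noise \<sigma> n" by (rule prob_space_noise) fact
  have rv: "(\<lambda>\<omega>. \<omega> i) \<in> measurable (noise \<sigma> n) (borel :: real measure)" for i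
  proof (cases "i < n")
    case True then show ?thesis
    by (intro measurable_noise_component) auto
  next
    case False
    have "(\<lambda>\<omega>. \<omega> i) \<in> measurable (noise \<sigma> n) (borel :: real measure) \<longleftrightarrow>
          (\<lambda>\<omega>. undefined) \<in> measurable (noise \<sigma> n) (borel :: real measure)"
      by (rule measurable_cong) (use False in \<open>auto simp: noise_def space_PiM PiE_iff extensional_def\<close>)
    then show ?thesis by simp
  qed
  have "distr (noise \<sigma> n) (\<Pi>\<^sub>M i\<in>{..<n}. borel) (\<lambda>x. \<lambda>i\<in>{..<n}. x i)
      = distr (noise \<sigma> n) (noise \<sigma> n) (\<lambda>x. x)"
    by (rule distr_cong) (auto simp: noise_def space_PiM PiE_iff extensional_def intro!: sets_PiM_cong ext)
  also have "\<dots> = noise \<sigma> n" by simp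
  also have "\<dots> = (\<Pi>\<^sub>M i\<in>{..<n}. distr (noise \<sigma> n) borel (\<lambda>\<omega>. \<omega> i))"
    unfolding noise_def[of \<sigma> n]
    by (intro PiM_cong refl, subst distr_noise_component[symmetric, OF assms(1)])
       (auto simp: noise_def)
  finally show ?thesis
    using rv assms
    by (subst P.indep_vars_iff_distr_eq_PiM) (auto intro: measurable_noise_component)
qed

lemma distributed_noise_linear_form:
  assumes sig: "\<sigma> > 0" and a: "(\<Sum>i<n. (a i)\<^sup>2) > 0"
  shows "distributed (noise \<sigma> n) lborel (\<lambda>\<omega>. \<Sum>i<n. a i * \<omega> i)
    (normal_density 0 (\<sigma> * sqrt (\<Sum>i<n. (a i)\<^sup>2)))"
proof -
  interpret P: prob_space "noise \<sigma> n" by (rule prob_space_noise) fact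
  define I where "I = {i. i < n \<and> a i \<noteq> 0}"
  have n: "n > 0" using a by (cases n) auto
  have fin: "finite I" unfolding I_def by auto
  have ne: "I \<noteq> {}"
  proof
    assume "I = {}"
    then have "\<forall>i<n. a i = 0" unfolding I_def by auto
    then have "(\<Sum>i<n. (a i)\<^sup>2) = 0" by simp
    with a show False by simp
  qed
  have comp: "distributed (noise \<sigma> n) lborel (\<lambda>\<omega>. \<omega> i) (normal_density 0 \<sigma>)" if "i < n" for i
    unfolding distributed_def
    using distr_noise_component[OF sig that, of lborel] measurable_noise_component[OF that, of lborel]
    by auto
  have d: "distributed (noise \<sigma> n) lborel (\<lambda>\<omega>. a i * \<omega> i) (normal_density 0 (\<bar>a i\<bar> * \<sigma>))" if "i \<in> I" for i
    using P.normal_density_affine[OF comp sig, of i "a i" 0] that unfolding I_def by auto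
  have ind: "P.indep_vars (\<lambda>_. borel) (\<lambda>i \<omega>. a i * \<omega> i) I"
    using P.indep_vars_compose2[OF P.indep_vars_subset[OF indep_vars_noise[OF sig n], of I],
        of "\<lambda>i x. a i * x" "\<lambda>_. borel"]
    unfolding I_def by auto
  have "distributed (noise \<sigma> n) lborel (\<lambda>\<omega>. \<Sum>i\<in>I. a i * \<omega> i)
      (normal_density (\<Sum>i\<in>I. 0) (sqrt (\<Sum>i\<in>I. (\<bar>a i\<bar> * \<sigma>)\<^sup>2)))"
    by (rule P.sum_indep_normal[OF fin ne ind]) (use d sig in \<open>auto simp: I_def\<close>)
  moreover have "(\<lambda>\<omega>. \<Sum>i\<in>I. a i * \<omega> i) = (\<lambda>\<omega>. \<Sum>i<n. a i * \<omega> i)"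
    unfolding I_def by (intro ext sum.mono_neutral_left) auto
  moreover have "(\<Sum>i\<in>I. (\<bar>a i\<bar> * \<sigma>)\<^sup>2) = \<sigma>\<^sup>2 * (\<Sum>i<n. (a i)\<^sup>2)"
  proof -
    have "(\<Sum>i\<in>I. (\<bar>a i\<bar> * \<sigma>)\<^sup>2) = \<sigma>\<^sup>2 * (\<Sum>i\<in>I. (a i)\<^sup>2)"
      by (simp add: sum_distrib_left power_mult_distrib mult.commute)
    also have "(\<Sum>i\<in>I. (a i)\<^sup>2) = (\<Sum>i<n. (a i)\<^sup>2)"
      unfolding I_def by (intro sum.mono_neutral_left) auto
    finally show ?thesis .
  qed
  ultimately show ?thesis using sig by (simp add: real_sqrt_mult)
qed

lemma distributed_normal_upper_tail:
  assumes P: "prob_space M" and d: "distributed M lborel Z (normal_density 0 \<tau>)"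
    and tau: "\<tau> > 0" and t: "t > 0"
  shows "measure M {\<omega> \<in> space M. t < Z \<omega>} \<le> \<tau> / (t * sqrt (2 * pi)) * exp (- t\<^sup>2 / (2 * \<tau>\<^sup>2))"
proof -
  interpret prob_space M by fact
  have "emeasure M (Z -` {t<..} \<inter> space M) = (\<integral>\<^sup>+x. ennreal (normal_density 0 \<tau> x) * indicator {t<..} x \<partial>lborel)"
    by (rule distributed_emeasure[OF d]) auto
  also have "\<dots> \<le> ennreal (\<tau> / (t * sqrt (2 * pi)) * exp (- t\<^sup>2 / (2 * \<tau>\<^sup>2)))"
    by (rule nn_integral_normal_density_upper_tail[OF tau t])
  finally have "ennreal (measure M (Z -` {t<..} \<inter> space M)) \<le> ennreal (\<tau> / (t * sqrt (2 * pi)) * exp (- t\<^sup>2 / (2 * \<tau>\<^sup>2)))"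
    by (simp add: emeasure_eq_measure)
  then have "measure M (Z -` {t<..} \<inter> space M) \<le> \<tau> / (t * sqrt (2 * pi)) * exp (- t\<^sup>2 / (2 * \<tau>\<^sup>2))"
    using tau t by (subst (asm) ennreal_le_iff) auto
  moreover have "Z -` {t<..} \<inter> space M = {\<omega> \<in> space M. t < Z \<omega>}" by auto
  ultimately show ?thesis by simp
qed

lemma noise_linear_form_abs_tail:
  assumes sig: "\<sigma> > 0" and a: "(\<Sum>i<n. (a i)\<^sup>2) > 0" and t: "t > 0"
  defines "\<tau> \<equiv> \<sigma> * sqrt (\<Sum>i<n. (a i)\<^sup>2)"
  shows "measure (noise \<sigma> n) {\<omega> \<in> space (noise \<sigma> n). t < \<bar>\<Sum>i<n. a i * \<omega> i\<bar>}
     \<le> sqrt (2 / pi) * \<tau> / t * exp (- t\<^sup>2 / (2 * \<tau>\<^sup>2))"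
proof -
  interpret P: prob_space "noise \<sigma> n" by (rule prob_space_noise) fact
  let ?Z = "\<lambda>\<omega>. \<Sum>i<n. a i * \<omega> i"
  let ?b = "\<tau> / (t * sqrt (2 * pi)) * exp (- t\<^sup>2 / (2 * \<tau>\<^sup>2))"
  have tau: "\<tau> > 0" using sig a unfolding \<tau>_def by simp
  have d: "distributed (noise \<sigma> n) lborel ?Z (normal_density 0 \<tau>)"
    unfolding \<tau>_def by (rule distributed_noise_linear_form[OF sig a])
  have d2: "distributed (noise \<sigma> n) lborel (\<lambda>\<omega>. 0 + (-1) * ?Z \<omega>) (normal_density (0 + (-1) * 0) (\<bar>-1\<bar> * \<tau>))"
    by (rule P.normal_density_affine[OF d tau]) simp
  have d2': "distributed (noise \<sigma> n) lborel (\<lambda>\<omega>. - ?Z \<omega>) (normal_density 0 \<tau>)"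
    using d2 by simp
  have m: "?Z \<in> borel_measurable (noise \<sigma> n)" using distributed_measurable[OF d] by simp
  have "{\<omega> \<in> space (noise \<sigma> n). t < \<bar>?Z \<omega>\<bar>} =
        {\<omega> \<in> space (noise \<sigma> n). t < ?Z \<omega>} \<union> {\<omega> \<in> space (noise \<sigma> n). t < - ?Z \<omega>}"
    by auto
  then have "measure (noise \<sigma> n) {\<omega> \<in> space (noise \<sigma> n). t < \<bar>?Z \<omega>\<bar>}
     \<le> measure (noise \<sigma> n) {\<omega> \<in> space (noise \<sigma> n). t < ?Z \<omega>} + measure (noise \<sigma> n) {\<omega> \<in> space (noise \<sigma> n). t < - ?Z \<omega>}"
    using m by (simp add: measure_Un_le)
  also have "\<dots> \<le> ?b + ?b"
    by (intro add_mono distributed_normal_upper_tail[OF P.prob_space_axioms _ tau t] d d2')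
  also have "?b + ?b = (2 / sqrt (2 * pi)) * \<tau> / t * exp (- t\<^sup>2 / (2 * \<tau>\<^sup>2))"
    using t by (simp add: field_simps)
  also have "2 / sqrt (2 * pi) = sqrt (2 / pi)"
    by (simp add: real_sqrt_divide real_sqrt_mult field_simps)
  finally show ?thesis .
qed

lemma noise_column_tail:
  assumes sig: "\<sigma> > 0" and n: "n > 0" and a: "(\<Sum>i<n. (a i)\<^sup>2) = real n"
    and c2: "c2 > 0" and x: "x > 1"
  shows "measure (noise \<sigma> n)
      {\<omega> \<in> space (noise \<sigma> n). real n * (c2 * sqrt (ln x / real n)) < \<bar>\<Sum>i<n. a i * \<omega> i\<bar>}
    \<le> sqrt (2 / pi) / c2 * \<sigma> * ln x powr (-1/2) * x powr (- (c2\<^sup>2 / (2 * \<sigma>\<^sup>2)))"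
proof -
  define L where "L = ln x"
  have L: "L > 0" unfolding L_def using x by simp
  have sn: "sqrt (real n) > 0" and sL: "sqrt L > 0" using n L by auto
  have q: "sqrt (L / real n) = sqrt L / sqrt (real n)" by (simp add: real_sqrt_divide)
  have nn: "real n = sqrt (real n) * sqrt (real n)" by simp
  have t: "real n * (c2 * sqrt (L / real n)) > 0" using n c2 L by simp
  have ratio: "(\<sigma> * sqrt (real n)) / (real n * (c2 * sqrt (L / real n))) = \<sigma> / (c2 * sqrt L)"
    unfolding q using sn sL c2 by (subst nn) (simp add: field_simps)
  have expo: "(real n * (c2 * sqrt (L / real n)))\<^sup>2 / (2 * (\<sigma> * sqrt (real n))\<^sup>2)
      = c2\<^sup>2 / (2 * \<sigma>\<^sup>2) * L"
    unfolding q using sn sL sig n L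
    by (simp add: power_mult_distrib power_divide field_simps power2_eq_square)
  have "measure (noise \<sigma> n)
      {\<omega> \<in> space (noise \<sigma> n). real n * (c2 * sqrt (L / real n)) < \<bar>\<Sum>i<n. a i * \<omega> i\<bar>}
    \<le> sqrt (2 / pi) * ((\<sigma> * sqrt (real n)) / (real n * (c2 * sqrt (L / real n))))
      * exp (- ((real n * (c2 * sqrt (L / real n)))\<^sup>2 / (2 * (\<sigma> * sqrt (real n))\<^sup>2)))"
    using noise_linear_form_abs_tail[where n = n and a = a, OF sig _ t] a n by simp
  also have "\<dots> = sqrt (2 / pi) / c2 * \<sigma> * L powr (-1/2) * exp (- (c2\<^sup>2 / (2 * \<sigma>\<^sup>2)) * L)"
    unfolding ratio expo using sL c2 L by (simp add: powr_minus_divide powr_half_sqrt field_simps)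
  also have "exp (- (c2\<^sup>2 / (2 * \<sigma>\<^sup>2)) * L) = x powr (- (c2\<^sup>2 / (2 * \<sigma>\<^sup>2)))"
    unfolding L_def using x by (simp add: powr_def)
  finally show ?thesis unfolding L_def .
qed

lemma noise_good_event:
  fixes X :: "nat \<Rightarrow> nat \<Rightarrow> real" and p n :: nat and S0 :: "nat set"
  assumes sig: "\<sigma> > 0" and c2: "c2 > 0" and c2': "c2' > 0" and n2: "n \<ge> 2"
    and col: "\<forall>j<p. (\<Sum>i<n. (X i j)\<^sup>2) = real n" and S0: "S0 \<subseteq> {..<p}"
  defines "pt \<equiv> real (max n p)"
  defines "la0 \<equiv> c2 * sqrt (ln pt / real n)" and "la1 \<equiv> c2' * sqrt (ln (real n) / real n)"
  shows "\<exists>E \<in> sets (noise \<sigma> n).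
      (\<forall>\<omega>\<in>E. (\<forall>j<p. \<bar>\<Sum>i<n. X i j * \<omega> i\<bar> \<le> real n * la0)
             \<and> (\<forall>j\<in>S0. \<bar>\<Sum>i<n. X i j * \<omega> i\<bar> \<le> real n * la1))
    \<and> measure (noise \<sigma> n) E \<ge>
        1 - sqrt (2 / pi) / c2 * \<sigma> * ln pt powr (-1/2) * pt powr (1 - c2\<^sup>2 / (2 * \<sigma>\<^sup>2))
          - sqrt (2 / pi) / c2' * \<sigma> * real (card S0) * ln (real n) powr (-1/2)
              * real n powr (- (c2'\<^sup>2) / (2 * \<sigma>\<^sup>2))"
proof -
  interpret P: prob_space "noise \<sigma> n" by (rule prob_space_noise) fact
  define z where "z = (\<lambda>j \<omega>. \<Sum>i<n. X i j * \<omega> i)"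
  define B1 where "B1 = (\<lambda>j. {\<omega> \<in> space (noise \<sigma> n). real n * la0 < \<bar>z j \<omega>\<bar>})"
  define B2 where "B2 = (\<lambda>j. {\<omega> \<in> space (noise \<sigma> n). real n * la1 < \<bar>z j \<omega>\<bar>})"
  define U where "U = (\<Union>j\<in>{..<p}. B1 j) \<union> (\<Union>j\<in>S0. B2 j)"
  define b1 where "b1 = sqrt (2 / pi) / c2 * \<sigma> * ln pt powr (-1/2) * pt powr (- (c2\<^sup>2 / (2 * \<sigma>\<^sup>2)))"
  define b2 where "b2 = sqrt (2 / pi) / c2' * \<sigma> * ln (real n) powr (-1/2)
    * real n powr (- (c2'\<^sup>2 / (2 * \<sigma>\<^sup>2)))"
  have n: "n > 0" and pt: "pt > 1" using n2 unfolding pt_def by auto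
  have finS0: "finite S0" using S0 finite_subset by blast
  have "(\<lambda>\<omega>. \<bar>z j \<omega>\<bar>) \<in> borel_measurable (noise \<sigma> n)" for j
    unfolding z_def by (auto intro!: borel_measurable_abs borel_measurable_sum
        borel_measurable_times measurable_noise_component)
  then have B1s: "B1 j \<in> sets (noise \<sigma> n)" and B2s: "B2 j \<in> sets (noise \<sigma> n)" for j
    unfolding B1_def B2_def by (auto intro: borel_measurable_less[OF borel_measurable_const])
  then have Us: "U \<in> sets (noise \<sigma> n)" unfolding U_def using finS0 by auto
  have mB1: "measure (noise \<sigma> n) (B1 j) \<le> b1" if "j < p" for j
    unfolding B1_def b1_def z_def la0_def
    by (rule noise_column_tail[OF sig n _ c2 pt]) (use col that in auto)
  have mB2: "measure (noise \<sigma> n) (B2 j) \<le> b2" if "j \<in> S0" for j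
    unfolding B2_def b2_def z_def la1_def
    by (rule noise_column_tail[OF sig n _ c2']) (use col that S0 n2 in auto)
  have "measure (noise \<sigma> n) U
      \<le> measure (noise \<sigma> n) (\<Union>j\<in>{..<p}. B1 j) + measure (noise \<sigma> n) (\<Union>j\<in>S0. B2 j)"
    unfolding U_def using B1s B2s finS0 by (intro measure_Un_le) auto
  also have "\<dots> \<le> (\<Sum>j<p. measure (noise \<sigma> n) (B1 j)) + (\<Sum>j\<in>S0. measure (noise \<sigma> n) (B2 j))"
    using B1s B2s finS0 by (intro add_mono measure_UNION_le) auto
  also have "\<dots> \<le> real p * b1 + real (card S0) * b2"
    using mB1 mB2 sum_mono[of "{..<p}" "\<lambda>j. measure (noise \<sigma> n) (B1 j)" "\<lambda>_. b1"]
      sum_mono[of S0 "\<lambda>j. measure (noise \<sigma> n) (B2 j)" "\<lambda>_. b2"]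
    by (intro add_mono) auto
  also have "real p * b1 \<le> pt * b1"
    unfolding pt_def b1_def using c2 sig by (intro mult_right_mono) auto
  also have "pt * b1 = sqrt (2 / pi) / c2 * \<sigma> * ln pt powr (-1/2) * pt powr (1 - c2\<^sup>2 / (2 * \<sigma>\<^sup>2))"
    unfolding b1_def using pt by (simp add: powr_diff powr_minus field_simps)
  finally have mU: "measure (noise \<sigma> n) U
    \<le> sqrt (2 / pi) / c2 * \<sigma> * ln pt powr (-1/2) * pt powr (1 - c2\<^sup>2 / (2 * \<sigma>\<^sup>2))
      + sqrt (2 / pi) / c2' * \<sigma> * real (card S0) * ln (real n) powr (-1/2)
          * real n powr (- (c2'\<^sup>2) / (2 * \<sigma>\<^sup>2))"
    unfolding b2_def by (simp add: ac_simps)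
  show ?thesis
  proof (intro bexI conjI)
    show "space (noise \<sigma> n) - U \<in> sets (noise \<sigma> n)" using Us by auto
    show "measure (noise \<sigma> n) (space (noise \<sigma> n) - U) \<ge>
        1 - sqrt (2 / pi) / c2 * \<sigma> * ln pt powr (-1/2) * pt powr (1 - c2\<^sup>2 / (2 * \<sigma>\<^sup>2))
          - sqrt (2 / pi) / c2' * \<sigma> * real (card S0) * ln (real n) powr (-1/2)
              * real n powr (- (c2'\<^sup>2) / (2 * \<sigma>\<^sup>2))"
      using P.prob_compl[OF Us] mU by linarith
    show "\<forall>\<omega>\<in>space (noise \<sigma> n) - U. (\<forall>j<p. \<bar>\<Sum>i<n. X i j * \<omega> i\<bar> \<le> real n * la0)
        \<and> (\<forall>j\<in>S0. \<bar>\<Sum>i<n. X i j * \<omega> i\<bar> \<le> real n * la1)"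
      unfolding U_def B1_def B2_def z_def by (auto simp: not_less)
  qed
qed

lemma norm2_sq: "(norm2 m v)\<^sup>2 = (\<Sum>i<m. (v i)\<^sup>2)"
  unfolding norm2_def by (simp add: sum_nonneg)

lemma norm2_nonneg: "norm2 m v \<ge> 0"
  unfolding norm2_def by (simp add: sum_nonneg)

lemma norm2_divide: "d > 0 \<Longrightarrow> norm2 m (\<lambda>i. v i / d) = norm2 m v / d"
  unfolding norm2_def
  by (simp add: power_divide sum_divide_distrib[symmetric] real_sqrt_divide)

lemma finite_supp: "finite (supp p b)" unfolding supp_def by auto

lemma supp_subset: "supp p b \<subseteq> {..<p}" unfolding supp_def by auto

lemma rspark_norm2_lower:
  assumes "card (supp p \<delta>) < rspark c n p X"
  shows "c * norm2 p \<delta> \<le> norm2 n (mat_vec p X \<delta>) / sqrt (real n)"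
proof (rule ccontr)
  assume A: "\<not> ?thesis"
  define D where "D = norm2 p \<delta>"
  have "D \<noteq> 0"
  proof
    assume "D = 0"
    then show False using A norm2_nonneg[of n "mat_vec p X \<delta>"] by (simp add: D_def)
  qed
  then have D: "D > 0" using norm2_nonneg[of p \<delta>] D_def by simp
  define \<delta>' where "\<delta>' = (\<lambda>j. if j < p then \<delta> j / D else 0)"
  have mv: "mat_vec p X \<delta>' = (\<lambda>i. mat_vec p X \<delta> i / D)"
    unfolding mat_vec_def \<delta>'_def by (auto simp: sum_divide_distrib intro!: ext sum.cong)
  have n1: "norm2 p \<delta>' = 1"
  proof -
    have "norm2 p \<delta>' = norm2 p (\<lambda>j. \<delta> j / D)"
      unfolding norm2_def \<delta>'_def by (auto intro!: sum.cong)
    also have "\<dots> = 1" using D by (simp add: norm2_divide D_def)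
    finally show ?thesis .
  qed
  have lt: "norm2 n (mat_vec p X \<delta>') / sqrt (real n) < c"
  proof -
    have "norm2 n (mat_vec p X \<delta>') / sqrt (real n) = (norm2 n (mat_vec p X \<delta>) / sqrt (real n)) / D"
      using D by (simp add: mv norm2_divide)
    also have "\<dots> < c"
    proof -
      have "norm2 n (mat_vec p X \<delta>) / sqrt (real n) < c * D" using A by (simp add: D_def)
      then show ?thesis by (subst pos_divide_less_eq[OF D]) simp
    qed
    finally show ?thesis .
  qed
  have "bad_cols c n p X (card (supp p \<delta>))"
    unfolding bad_cols_def
    by (rule exI[of _ "supp p \<delta>"], intro conjI supp_subset refl exI[of _ \<delta>'])
       (use n1 lt in \<open>auto simp: \<delta>'_def supp_def\<close>)
  then have "rspark c n p X \<le> card (supp p \<delta>)"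
    unfolding rspark_def by (auto intro: Least_le)
  with assms show False by simp
qed

lemma sum_mult_le_sqrt_card_norm2:
  fixes \<delta> z :: "nat \<Rightarrow> real"
  assumes W: "W \<subseteq> {..<p}" and zero: "\<And>j. j < p \<Longrightarrow> j \<notin> W \<Longrightarrow> \<delta> j = 0"
    and zb: "\<And>j. j \<in> W \<Longrightarrow> \<bar>z j\<bar> \<le> L" and L: "L \<ge> 0"
  shows "(\<Sum>j<p. \<delta> j * z j) \<le> L * sqrt (real (card W)) * norm2 p \<delta>"
proof -
  have fin: "finite W" using W finite_subset by blast
  have "(\<Sum>j<p. \<delta> j * z j) = (\<Sum>j\<in>W. \<delta> j * z j)"
    using W zero by (intro sum.mono_neutral_right) auto
  also have "\<dots> \<le> (\<Sum>j\<in>W. \<bar>\<delta> j\<bar> * L)"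
  proof (intro sum_mono)
    fix j assume "j \<in> W"
    have "\<delta> j * z j \<le> \<bar>\<delta> j\<bar> * \<bar>z j\<bar>" by (simp add: abs_mult[symmetric])
    also have "\<dots> \<le> \<bar>\<delta> j\<bar> * L" using zb[OF \<open>j \<in> W\<close>] by (intro mult_left_mono) auto
    finally show "\<delta> j * z j \<le> \<bar>\<delta> j\<bar> * L" .
  qed
  also have "\<dots> = L * (\<Sum>j\<in>W. \<bar>\<delta> j\<bar>)" by (subst sum_distrib_left) (simp add: mult.commute)
  also have "(\<Sum>j\<in>W. \<bar>\<delta> j\<bar>) \<le> sqrt (real (card W)) * norm2 p \<delta>"
  proof -
    have "(\<Sum>j\<in>W. \<bar>\<delta> j\<bar>)\<^sup>2 \<le> (\<Sum>j\<in>W. (\<bar>\<delta> j\<bar>)\<^sup>2) * card W"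
      by (rule sum_squared_le_sum_of_squares)
    also have "(\<Sum>j\<in>W. (\<bar>\<delta> j\<bar>)\<^sup>2) = (\<Sum>j<p. (\<delta> j)\<^sup>2)"
      unfolding power2_abs using W zero by (intro sum.mono_neutral_left) auto
    finally have "(\<Sum>j\<in>W. \<bar>\<delta> j\<bar>)\<^sup>2 \<le> (sqrt (real (card W)) * norm2 p \<delta>)\<^sup>2"
      by (simp add: power_mult_distrib norm2_sq mult.commute)
    then show ?thesis
      by (rule power2_le_imp_le) (simp add: norm2_nonneg)
  qed
  then have "L * (\<Sum>j\<in>W. \<bar>\<delta> j\<bar>) \<le> L * (sqrt (real (card W)) * norm2 p \<delta>)"
    using L by (intro mult_left_mono)
  finally show ?thesis by (simp add: mult.assoc)
qed

lemma mat_vec_diff: "mat_vec p X (\<lambda>j. b j - a j) i = mat_vec p X b i - mat_vec p X a i"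
  unfolding mat_vec_def by (simp add: algebra_simps sum_subtractf)

lemma Qobj_eq_noise_expansion:
  fixes \<epsilon> \<beta>0 b :: "nat \<Rightarrow> real"
  assumes y: "y = (\<lambda>i. mat_vec p X \<beta>0 i + \<epsilon> i)"
  shows "Qobj pen lam n p X y b =
    ((\<Sum>i<n. (\<epsilon> i)\<^sup>2) - 2 * (\<Sum>j<p. (b j - \<beta>0 j) * (\<Sum>i<n. X i j * \<epsilon> i))
      + (\<Sum>i<n. (mat_vec p X (\<lambda>j. b j - \<beta>0 j) i)\<^sup>2)) / (2 * real n) + (\<Sum>j<p. pen lam \<bar>b j\<bar>)"
proof -
  let ?w = "mat_vec p X (\<lambda>j. b j - \<beta>0 j)"
  have r: "(\<lambda>i. y i - mat_vec p X b i) = (\<lambda>i. \<epsilon> i - ?w i)"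
    by (auto simp: y mat_vec_diff)
  have cross: "(\<Sum>i<n. \<epsilon> i * ?w i) = (\<Sum>j<p. (b j - \<beta>0 j) * (\<Sum>i<n. X i j * \<epsilon> i))"
    unfolding mat_vec_def
    by (simp add: sum_distrib_left sum_distrib_right mult_ac sum.swap[of _ "{..<n}"])
  have "(norm2 n (\<lambda>i. y i - mat_vec p X b i))\<^sup>2 = (\<Sum>i<n. (\<epsilon> i - ?w i)\<^sup>2)"
    by (simp add: r norm2_sq)
  also have "\<dots> = (\<Sum>i<n. (\<epsilon> i)\<^sup>2) - 2 * (\<Sum>i<n. \<epsilon> i * ?w i) + (\<Sum>i<n. (?w i)\<^sup>2)"
    by (simp add: power2_diff sum.distrib sum_subtractf sum_distrib_left mult.assoc)
  finally show ?thesis unfolding Qobj_def cross by simp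
qed

lemma sum_abs_powr_le_card_powr_sqrt_sum_sq:
  fixes x :: "'a \<Rightarrow> real"
  assumes fin: "finite S" and ne: "S \<noteq> {}" and nz: "\<And>j. j \<in> S \<Longrightarrow> x j \<noteq> 0"
    and q1: "1 \<le> q" and q2: "q \<le> 2"
  shows "(\<Sum>j\<in>S. \<bar>x j\<bar> powr q) powr (1 / q)
    \<le> real (card S) powr (1 / q - 1 / 2) * sqrt (\<Sum>j\<in>S. (x j)\<^sup>2)"
proof -
  define m where "m = card S"
  define A where "A = (\<Sum>j\<in>S. \<bar>x j\<bar> powr q)"
  define B where "B = (\<Sum>j\<in>S. (x j)\<^sup>2)"
  have m: "m > 0" using fin ne unfolding m_def by (simp add: card_gt_0_iff)
  have A0: "A \<ge> 0" and B0: "B \<ge> 0" unfolding A_def B_def by (simp_all add: sum_nonneg)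
  have conv: "convex_on {0<..} (\<lambda>u::real. u powr (2 / q))"
    by (rule powr_convex) (use q1 q2 in \<open>simp add: field_simps\<close>)
  have "(\<lambda>u. u powr (2 / q)) (\<Sum>j\<in>S. (1 / real m) *\<^sub>R (\<bar>x j\<bar> powr q))
      \<le> (\<Sum>j\<in>S. (1 / real m) * (\<lambda>u. u powr (2 / q)) (\<bar>x j\<bar> powr q))"
    by (rule convex_on_sum[OF fin ne conv]) (use m nz in \<open>auto simp: m_def\<close>)
  moreover have "(\<Sum>j\<in>S. (1 / real m) *\<^sub>R (\<bar>x j\<bar> powr q)) = A / real m"
    unfolding A_def by (simp add: sum_divide_distrib)
  moreover have "(\<Sum>j\<in>S. (1 / real m) * (\<bar>x j\<bar> powr q) powr (2 / q)) = B / real m"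
  proof -
    have "(\<bar>x j\<bar> powr q) powr (2 / q) = (x j)\<^sup>2" for j
      using q1 by (simp add: powr_powr powr_numeral[symmetric])
    then show ?thesis unfolding B_def by (simp add: sum_divide_distrib)
  qed
  ultimately have "(A / real m) powr (2 / q) \<le> B / real m" by simp
  then have mean: "A / real m \<le> (B / real m) powr (q / 2)"
    using q1 A0 m powr_mono2[of "q / 2" "(A / real m) powr (2 / q)" "B / real m"]
    by (simp add: powr_powr)
  have "A powr (1 / q) = (real m * (A / real m)) powr (1 / q)" using m by simp
  also have "\<dots> \<le> (real m * (B / real m) powr (q / 2)) powr (1 / q)"
    using mean m A0 q1 by (intro powr_mono2 mult_left_mono) auto
  also have "\<dots> = real m powr (1 / q) * (B / real m) powr (1 / 2)"
    using m B0 q1 by (simp add: powr_mult powr_powr)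
  also have "\<dots> = real m powr (1 / q - 1 / 2) * sqrt B"
    using m B0 by (simp add: powr_divide powr_diff powr_half_sqrt)
  finally show ?thesis unfolding A_def B_def m_def .
qed

lemma normq_le_card_powr_norm2:
  fixes x :: "nat \<Rightarrow> real"
  assumes S: "S \<subseteq> {..<p}" and zero: "\<And>j. j < p \<Longrightarrow> j \<notin> S \<Longrightarrow> x j = 0"
    and q1: "1 \<le> q" and q2: "q \<le> 2"
  shows "normq q p x \<le> real (card S) powr (1/q - 1/2) * norm2 p x"
proof -
  define S' where "S' = {j. j < p \<and> x j \<noteq> 0}"
  have S'S: "S' \<subseteq> S" using zero unfolding S'_def by auto
  have finS: "finite S" using S finite_subset by blast
  have finS': "finite S'" unfolding S'_def by auto
  have normq: "normq q p x = (\<Sum>j\<in>S'. \<bar>x j\<bar> powr q) powr (1 / q)"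
    unfolding normq_def S'_def by (intro arg_cong[where f = "\<lambda>u. u powr (1 / q)"] sum.mono_neutral_right) auto
  have norm2: "norm2 p x = sqrt (\<Sum>j\<in>S'. (x j)\<^sup>2)"
    unfolding norm2_def S'_def by (intro arg_cong[where f = sqrt] sum.mono_neutral_right) auto
  show ?thesis
  proof (cases "S' = {}")
    case True
    then show ?thesis using norm2_nonneg[of p x] by (simp add: normq)
  next
    case False
    have "normq q p x \<le> real (card S') powr (1 / q - 1 / 2) * norm2 p x"
      unfolding normq norm2
      by (rule sum_abs_powr_le_card_powr_sqrt_sum_sq[OF finS' False _ q1 q2]) (simp add: S'_def)
    also have "\<dots> \<le> real (card S) powr (1 / q - 1 / 2) * norm2 p x"
    proof -
      have "real (card S') \<le> real (card S)" using S'S finS by (simp add: card_mono)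
      then show ?thesis using q1 q2 False finS' norm2_nonneg[of p x]
        by (intro mult_right_mono powr_mono2) (auto simp: field_simps card_gt_0_iff)
    qed
    finally show ?thesis .
  qed
qed

lemma abs_le_norm2: "j < p \<Longrightarrow> \<bar>x j\<bar> \<le> norm2 p x"
proof -
  assume j: "j < p"
  have "(x j)\<^sup>2 \<le> (\<Sum>i<p. (x i)\<^sup>2)" using j by (intro member_le_sum) auto
  then have "(x j)\<^sup>2 \<le> (norm2 p x)\<^sup>2" by (simp add: norm2_sq)
  then show ?thesis using norm2_nonneg[of p x] by (metis abs_le_square_iff abs_of_nonneg)
qed

lemma supp_eq_filter: "supp p b = {j\<in>{..<p}. b j \<noteq> 0}"
  unfolding supp_def by auto

lemma pen_H_0: "lam \<ge> 0 \<Longrightarrow> pen_H lam 0 = 0"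
  unfolding pen_H_def by simp

lemma pen_H_ge: "lam \<le> t \<Longrightarrow> pen_H lam t = lam\<^sup>2 / 2"
  unfolding pen_H_def by simp

lemma pen_H_le: "0 \<le> t \<Longrightarrow> t \<le> lam \<Longrightarrow> pen_H lam t = lam * t - t\<^sup>2 / 2"
  unfolding pen_H_def by (simp add: power2_eq_square field_simps)

lemma sum_pen_eq_l0:
  assumes lam: "lam > 0" and pen: "pen \<in> {pen_H, pen_H0}"
    and reg: "pen = pen_H \<Longrightarrow> (\<forall>j<p. b j \<noteq> 0 \<longrightarrow> lam \<le> \<bar>b j\<bar>)"
  shows "(\<Sum>j<p. pen lam \<bar>b j\<bar>) = real (l0 p b) * lam\<^sup>2 / 2"
proof -
  have t: "pen lam \<bar>b j\<bar> = (if b j \<noteq> 0 then lam\<^sup>2 / 2 else 0)" if "j < p" for j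
  proof (cases "pen = pen_H")
    case True
    then show ?thesis using reg that lam by (auto simp: pen_H_0 pen_H_ge)
  next
    case False
    then have "pen = pen_H0" using pen by auto
    then show ?thesis by (simp add: pen_H0_def)
  qed
  have "(\<Sum>j<p. pen lam \<bar>b j\<bar>) = (\<Sum>j<p. if b j \<noteq> 0 then lam\<^sup>2 / 2 else 0)"
    using t by (intro sum.cong) auto
  also have "\<dots> = (\<Sum>j\<in>supp p b. lam\<^sup>2 / 2)"
    unfolding supp_eq_filter by (rule sum.inter_filter[symmetric]) simp
  also have "\<dots> = real (l0 p b) * lam\<^sup>2 / 2" by (simp add: l0_def)
  finally show ?thesis .
qed

text \<open>On \<open>|t| \<le> \<lambda>\<close> the term \<open>-t\<^sup>2/2\<close> of the penalty cancels the quadratic term of the loss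
  (the column has squared norm \<open>n\<close>), so \<open>Q\<close> is affine in \<open>t\<close> on either side of \<open>0\<close>.\<close>

lemma Qobj_pen_H_update:
  fixes b y :: "nat \<Rightarrow> real"
  assumes n: "n > 0" and j: "j < p" and col: "(\<Sum>i<n. (X i j)\<^sup>2) = real n"
    and t: "\<bar>t\<bar> \<le> lam"
  defines "r \<equiv> \<lambda>i. y i - mat_vec p X (b(j:=0)) i"
  shows "Qobj pen_H lam n p X y (b(j:=t)) =
     ((\<Sum>i<n. (r i)\<^sup>2) / (2 * real n) + (\<Sum>k\<in>{..<p}-{j}. pen_H lam \<bar>b k\<bar>))
     - t * (\<Sum>i<n. r i * X i j) / real n + lam * \<bar>t\<bar>"
proof -
  have mv: "mat_vec p X (b(j:=t)) i = mat_vec p X (b(j:=0)) i + X i j * t" for i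
  proof -
    have "mat_vec p X (b(j:=t)) i = X i j * t + (\<Sum>k\<in>{..<p}-{j}. X i k * b k)"
      unfolding mat_vec_def using j by (subst sum.remove[of _ j]) (auto intro!: sum.cong)
    moreover have "mat_vec p X (b(j:=0)) i = (\<Sum>k\<in>{..<p}-{j}. X i k * b k)"
      unfolding mat_vec_def using j by (subst sum.remove[of _ j]) (auto intro!: sum.cong)
    ultimately show ?thesis by simp
  qed
  have res: "(\<lambda>i. y i - mat_vec p X (b(j:=t)) i) = (\<lambda>i. r i - X i j * t)"
    by (auto simp: mv r_def)
  have sq: "(\<Sum>i<n. (r i - X i j * t)\<^sup>2) = (\<Sum>i<n. (r i)\<^sup>2) - 2 * t * (\<Sum>i<n. r i * X i j) + t\<^sup>2 * real n"
  proof -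
    have "(\<Sum>i<n. (r i - X i j * t)\<^sup>2) = (\<Sum>i<n. (r i)\<^sup>2) - 2 * t * (\<Sum>i<n. r i * X i j) + t\<^sup>2 * (\<Sum>i<n. (X i j)\<^sup>2)"
      by (simp add: power2_diff sum.distrib sum_subtractf sum_distrib_left power_mult_distrib mult_ac)
    then show ?thesis using col by simp
  qed
  have pens: "(\<Sum>k<p. pen_H lam \<bar>(b(j:=t)) k\<bar>) = pen_H lam \<bar>t\<bar> + (\<Sum>k\<in>{..<p}-{j}. pen_H lam \<bar>b k\<bar>)"
    using j by (subst sum.remove[of _ j]) (auto intro!: sum.cong)
  have ph: "pen_H lam \<bar>t\<bar> = lam * \<bar>t\<bar> - t\<^sup>2 / 2"
    using t by (subst pen_H_le) auto
  show ?thesis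
    unfolding Qobj_def res norm2_sq sq pens ph
    using n by (simp add: field_simps power2_eq_square)
qed

lemma is_global_minD:
  "is_global_min pen lam n p M X y b \<Longrightarrow> \<beta> \<in> S_set p M \<Longrightarrow> Qobj pen lam n p X y b \<le> Qobj pen lam n p X y \<beta>"
  unfolding is_global_min_def by auto

lemma is_global_min_pen_H_update:
  fixes b :: "nat \<Rightarrow> real"
  assumes n: "n > 0" and lam: "lam > 0" and j: "j < p" and col: "(\<Sum>i<n. (X i j)\<^sup>2) = real n"
    and gm: "is_global_min pen_H lam n p M X y b" and bj: "b j \<noteq> 0" "\<bar>b j\<bar> < lam"
  shows "is_global_min pen_H lam n p M X y (b(j:=0))"
    and "is_global_min pen_H lam n p M X y (b(j:=sgn (b j) * lam))"
proof -
  define f where "f t = Qobj pen_H lam n p X y (b(j:=t))" for t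
  define r where "r = (\<lambda>i. y i - mat_vec p X (b(j:=0)) i)"
  define K where "K = (\<Sum>i<n. (r i)\<^sup>2) / (2 * real n) + (\<Sum>k\<in>{..<p}-{j}. pen_H lam \<bar>b k\<bar>)"
  define R where "R = (\<Sum>i<n. r i * X i j)"
  have F: "f t = K - t * R / real n + lam * \<bar>t\<bar>" if "\<bar>t\<bar> \<le> lam" for t
    unfolding f_def K_def R_def r_def
    using Qobj_pen_H_update[where n=n and j=j and p=p and X=X and t=t and lam=lam and b=b and y=y, OF n j col that]
    by simp
  define sg where "sg = sgn (b j)"
  have sg: "b j = sg * \<bar>b j\<bar>" "\<bar>sg\<bar> = 1" using bj by (auto simp: sg_def sgn_if)
  define \<alpha> where "\<alpha> = lam - sg * R / real n"
  have f0: "f 0 = K" using F[of 0] lam by simp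
  have fb: "f (b j) = K + \<bar>b j\<bar> * \<alpha>"
  proof -
    have "f (b j) = K - b j * R / real n + lam * \<bar>b j\<bar>" using F bj by simp
    also have "\<dots> = K + \<bar>b j\<bar> * \<alpha>" unfolding \<alpha>_def by (subst (1) sg(1)) (simp add: algebra_simps)
    finally show ?thesis .
  qed
  have fl: "f (sg * lam) = K + lam * \<alpha>"
  proof -
    have "\<bar>sg * lam\<bar> = lam" using sg lam by (simp add: abs_mult)
    then have "f (sg * lam) = K - sg * lam * R / real n + lam * lam" using F[of "sg * lam"] by simp
    also have "\<dots> = K + lam * \<alpha>" unfolding \<alpha>_def by (simp add: algebra_simps)
    finally show ?thesis .
  qed
  have bb: "b(j := b j) = b" by simp
  have Sb: "b \<in> S_set p M" using gm unfolding is_global_min_def by auto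
  have supp0: "supp p (b(j:=0)) \<subseteq> supp p b" unfolding supp_def by auto
  have S0: "b(j:=0) \<in> S_set p M"
  proof -
    have "l0 p (b(j:=0)) \<le> l0 p b" unfolding l0_def using supp0 finite_supp by (rule card_mono[rotated])
    then show ?thesis using Sb unfolding S_set_def by (simp add: le_less_trans[rotated])
  qed
  have suppl: "supp p (b(j:=sg * lam)) = supp p b" unfolding supp_def using sg lam bj by auto
  have Sl: "b(j:=sg * lam) \<in> S_set p M" using Sb suppl unfolding S_set_def l0_def by simp
  have "f (b j) \<le> f 0" unfolding f_def bb using is_global_minD[OF gm S0] .
  then have a1: "\<alpha> \<le> 0" using fb f0 bj by (simp add: mult_le_0_iff)
  have "f (b j) \<le> f (sg * lam)" unfolding f_def bb using is_global_minD[OF gm Sl] .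
  then have "0 \<le> (lam - \<bar>b j\<bar>) * \<alpha>" using fb fl by (simp add: algebra_simps)
  then have a2: "\<alpha> \<ge> 0" using bj by (simp add: zero_le_mult_iff)
  have a: "\<alpha> = 0" using a1 a2 by simp
  have eq0: "Qobj pen_H lam n p X y (b(j:=0)) = Qobj pen_H lam n p X y b"
    using f0 fb a unfolding f_def bb by simp
  have eql: "Qobj pen_H lam n p X y (b(j:=sg * lam)) = Qobj pen_H lam n p X y b"
    using fl fb a unfolding f_def bb by simp
  show "is_global_min pen_H lam n p M X y (b(j:=0))"
    using gm S0 eq0 unfolding is_global_min_def by simp
  show "is_global_min pen_H lam n p M X y (b(j:=sgn (b j) * lam))"
    using gm Sl eql unfolding is_global_min_def sg_def by simp
qed

text \<open>Induction on the number of nonzero entries of modulus below \<open>\<lambda>\<close>: if \<open>b\<^sub>j\<close> is one, both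
  \<open>b(j:=0)\<close> and \<open>b(j:=\<plusminus>\<lambda>)\<close> are global minimisers with fewer such entries, hence both would have
  support \<open>S0\<close>, although they differ at \<open>j\<close>.\<close>

lemma is_global_min_pen_H_nonzero_ge:
  fixes b :: "nat \<Rightarrow> real"
  assumes n: "n > 0" and lam: "lam > 0" and col: "\<forall>j<p. (\<Sum>i<n. (X i j)\<^sup>2) = real n"
    and good: "\<And>b. is_global_min pen_H lam n p M X y b \<Longrightarrow> (\<forall>j<p. b j \<noteq> 0 \<longrightarrow> lam \<le> \<bar>b j\<bar>)
       \<Longrightarrow> supp p b = S0"
    and gm: "is_global_min pen_H lam n p M X y b"
  shows "\<forall>j<p. b j \<noteq> 0 \<longrightarrow> lam \<le> \<bar>b j\<bar>"
proof -
  define N where "N = card {j. j < p \<and> b j \<noteq> 0 \<and> \<bar>b j\<bar> < lam}"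
  from N_def gm show ?thesis
  proof (induction N arbitrary: b rule: less_induct)
    case (less N b)
    show ?case
    proof (rule ccontr)
      assume "\<not> (\<forall>j<p. b j \<noteq> 0 \<longrightarrow> lam \<le> \<bar>b j\<bar>)"
      then obtain j where j: "j < p" "b j \<noteq> 0" "\<bar>b j\<bar> < lam" by force
      let ?A = "\<lambda>b. {j. j < p \<and> b j \<noteq> 0 \<and> \<bar>b j\<bar> < lam}"
      let ?b1 = "b(j:=0)" and ?b2 = "b(j:=sgn (b j) * lam)"
      have g1: "is_global_min pen_H lam n p M X y ?b1"
        using is_global_min_pen_H_update(1)[OF n lam j(1) _ less.prems(2) j(2,3)] col j by auto
      have g2: "is_global_min pen_H lam n p M X y ?b2"
        using is_global_min_pen_H_update(2)[OF n lam j(1) _ less.prems(2) j(2,3)] col j by auto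
      have "?A ?b1 = ?A b - {j}" by auto
      moreover have "?A ?b2 = ?A b - {j}" using lam j by (auto simp: abs_mult)
      moreover have "card (?A b - {j}) < card (?A b)"
        using j by (intro card_Diff1_less) auto
      ultimately have c1: "card (?A ?b1) < N" and c2: "card (?A ?b2) < N"
        using less.prems(1) by auto
      have r1: "\<forall>j<p. ?b1 j \<noteq> 0 \<longrightarrow> lam \<le> \<bar>?b1 j\<bar>" using less.IH[OF c1 refl g1] .
      have r2: "\<forall>j<p. ?b2 j \<noteq> 0 \<longrightarrow> lam \<le> \<bar>?b2 j\<bar>" using less.IH[OF c2 refl g2] .
      have "supp p ?b1 = supp p ?b2" using good[OF g1 r1] good[OF g2 r2] by (simp add: fun_upd_def)
      moreover have "j \<notin> supp p ?b1" unfolding supp_def by simp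
      moreover have "j \<in> supp p ?b2" unfolding supp_def using j lam by (simp add: sgn_if)
      ultimately show False by simp
    qed
  qed
qed

lemma two_mult_le_weighted_squares:
  fixes x y w :: real
  assumes "w > 0"
  shows "2 * x * y \<le> w * x\<^sup>2 + y\<^sup>2 / w"
proof -
  have "0 \<le> (w * x - y)\<^sup>2 / w" using assms by simp
  also have "\<dots> = w * x\<^sup>2 - 2 * x * y + y\<^sup>2 / w"
    using assms by (simp add: power2_eq_square field_simps)
  finally show ?thesis by simp
qed

lemma no_false_positives_arith:
  fixes c lam la0 D :: real and s k :: nat
  assumes c: "c > 0"
    and H: "c\<^sup>2 * D\<^sup>2 / 2 \<le> la0 * sqrt (real s + real k) * D - real k * lam\<^sup>2 / 2"
    and L: "la0\<^sup>2 * (2 * real s + 1) < lam\<^sup>2 * c\<^sup>2"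
  shows "k = 0"
proof (rule ccontr)
  assume "k \<noteq> 0"
  then have k: "real k \<ge> 1" by simp
  have "2 * D * (la0 * sqrt (real s + real k)) \<le> c\<^sup>2 * D\<^sup>2 + (la0 * sqrt (real s + real k))\<^sup>2 / c\<^sup>2"
    using c by (intro two_mult_le_weighted_squares) simp
  then have "real k * lam\<^sup>2 \<le> la0\<^sup>2 * (real s + real k) / c\<^sup>2"
    using H by (simp add: power_mult_distrib mult_ac)
  then have "real k * lam\<^sup>2 * c\<^sup>2 \<le> la0\<^sup>2 * (real s + real k)"
    using c by (simp add: pos_le_divide_eq)
  also have "\<dots> \<le> la0\<^sup>2 * (real k * (2 * real s + 1))"
  proof (intro mult_left_mono)
    show "real s + real k \<le> real k * (2 * real s + 1)"
      using k mult_left_mono[of 1 "real k" "real s"] by (simp add: algebra_simps)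
  qed simp
  also have "\<dots> < real k * (lam\<^sup>2 * c\<^sup>2)"
    using mult_strict_left_mono[OF L, of "real k"] k by (simp add: mult_ac)
  finally show False by (simp add: mult_ac)
qed

lemma no_false_negatives_arith:
  fixes c lam la0 D :: real and s k m :: nat
  assumes c: "c > 0" and la0: "la0 \<ge> 0" and D: "D \<ge> 0" and m: "0 < m" "m \<le> s"
    and H: "c\<^sup>2 * D\<^sup>2 / 2 \<le> la0 * sqrt (real s + real k) * D + (real m - real k) * lam\<^sup>2 / 2"
    and L: "la0\<^sup>2 * (2 * real s + 1) < lam\<^sup>2 * c\<^sup>2"
    and M1: "real m * lam\<^sup>2 / 2 < c\<^sup>2 * D\<^sup>2 / 4"
    and M2: "la0 * sqrt (2 * real s + 1) < c\<^sup>2 * D / 4"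
  shows False
proof -
  have "la0 * sqrt (real s + real k) * D \<le> c\<^sup>2 * D\<^sup>2 / 4 + real k * lam\<^sup>2 / 2"
  proof (cases "k \<le> s + 1")
    case True
    have "la0 * sqrt (real s + real k) * D \<le> la0 * sqrt (2 * real s + 1) * D"
      using True la0 D by (intro mult_right_mono mult_left_mono) auto
    also have "\<dots> \<le> c\<^sup>2 * D / 4 * D" using M2 D by (intro mult_right_mono) auto
    finally have "la0 * sqrt (real s + real k) * D \<le> c\<^sup>2 * D\<^sup>2 / 4" by (simp add: power2_eq_square)
    moreover have "0 \<le> real k * lam\<^sup>2 / 2" by simp
    ultimately show ?thesis by linarith
  next
    case False
    have s1: "s \<ge> 1" and k2: "k \<ge> 2" using m False by auto
    have "2 * s + k \<le> 2 * s * k"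
    proof -
      have "2 * s * k = 2 * s + 2 * s * (k - 1)" using k2 by (simp add: algebra_simps mult_eq_if)
      moreover have "2 * s * (k - 1) \<ge> 2 * (k - 1)" using s1 by simp
      ultimately show ?thesis using k2 by linarith
    qed
    then have "real (2 * s + k) \<le> real (2 * s * k)" by (simp only: of_nat_le_iff)
    then have "2 * (real s + real k) \<le> real k * (2 * real s + 1)" by (simp add: algebra_simps)
    then have "la0\<^sup>2 * (2 * real s + 1) * (2 * (real s + real k))
        \<le> lam\<^sup>2 * c\<^sup>2 * (real k * (2 * real s + 1))"
      by (rule mult_mono[OF less_imp_le[OF L]]) auto
    then have "(la0\<^sup>2 * (real s + real k) * 2) * (2 * real s + 1)
        \<le> (lam\<^sup>2 * c\<^sup>2 * real k) * (2 * real s + 1)"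
      by (simp only: ac_simps)
    then have "la0\<^sup>2 * (real s + real k) * 2 \<le> lam\<^sup>2 * c\<^sup>2 * real k"
      by (rule mult_right_le_imp_le) simp
    then have "la0\<^sup>2 * (real s + real k) / (c\<^sup>2 / 2) \<le> real k * lam\<^sup>2"
      using c by (simp add: pos_divide_le_eq field_simps)
    moreover have "2 * D * (la0 * sqrt (real s + real k))
        \<le> c\<^sup>2 / 2 * D\<^sup>2 + (la0 * sqrt (real s + real k))\<^sup>2 / (c\<^sup>2 / 2)"
      using c by (intro two_mult_le_weighted_squares) simp
    ultimately show ?thesis by (simp add: power_mult_distrib mult_ac)
  qed
  moreover have "(real m - real k) * lam\<^sup>2 / 2 = real m * lam\<^sup>2 / 2 - real k * lam\<^sup>2 / 2"
    by (simp add: left_diff_distrib diff_divide_distrib)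
  ultimately show False using H M1 by linarith
qed

lemma rspark_norm2_diff_lower:
  assumes "l0 p b + l0 p \<beta>0 < rspark c n p X"
  shows "c * norm2 p (\<lambda>j. b j - \<beta>0 j) \<le> norm2 n (mat_vec p X (\<lambda>j. b j - \<beta>0 j)) / sqrt (real n)"
proof (rule rspark_norm2_lower)
  have "supp p (\<lambda>j. b j - \<beta>0 j) \<subseteq> supp p b \<union> supp p \<beta>0" unfolding supp_def by auto
  then have "card (supp p (\<lambda>j. b j - \<beta>0 j)) \<le> card (supp p b \<union> supp p \<beta>0)"
    by (intro card_mono) (auto simp: finite_supp)
  also have "\<dots> \<le> l0 p b + l0 p \<beta>0" unfolding l0_def by (rule card_Un_le)
  finally show "card (supp p (\<lambda>j. b j - \<beta>0 j)) < rspark c n p X" using assms by linarith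
qed

lemma Qobj_basic_inequality:
  fixes b \<beta>0 \<epsilon> :: "nat \<Rightarrow> real"
  assumes n: "n > 0" and lam: "lam > 0" and pen: "pen \<in> {pen_H, pen_H0}"
    and y: "y = (\<lambda>i. mat_vec p X \<beta>0 i + \<epsilon> i)"
    and reg: "pen = pen_H \<Longrightarrow> \<forall>j<p. b j \<noteq> 0 \<longrightarrow> lam \<le> \<bar>b j\<bar>"
    and reg0: "pen = pen_H \<Longrightarrow> \<forall>j<p. \<beta>0 j \<noteq> 0 \<longrightarrow> lam \<le> \<bar>\<beta>0 j\<bar>"
    and Q: "Qobj pen lam n p X y b \<le> Qobj pen lam n p X y \<beta>0"
  shows "(norm2 n (mat_vec p X (\<lambda>j. b j - \<beta>0 j)) / sqrt (real n))\<^sup>2 / 2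
    \<le> (\<Sum>j<p. (b j - \<beta>0 j) * (\<Sum>i<n. X i j * \<epsilon> i)) / real n
      + (real (l0 p \<beta>0) - real (l0 p b)) * lam\<^sup>2 / 2"
proof -
  define Z where "Z = (\<Sum>j<p. (b j - \<beta>0 j) * (\<Sum>i<n. X i j * \<epsilon> i))"
  define W where "W = (\<Sum>i<n. (mat_vec p X (\<lambda>j. b j - \<beta>0 j) i)\<^sup>2)"
  define E where "E = (\<Sum>i<n. (\<epsilon> i)\<^sup>2)"
  have Qb: "Qobj pen lam n p X y b = (E - 2 * Z + W) / (2 * real n) + real (l0 p b) * lam\<^sup>2 / 2"
    using Qobj_eq_noise_expansion[OF y, of pen lam n b] sum_pen_eq_l0[OF lam pen reg]
    unfolding Z_def W_def E_def by simp
  have Qb0: "Qobj pen lam n p X y \<beta>0 = E / (2 * real n) + real (l0 p \<beta>0) * lam\<^sup>2 / 2"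
    using Qobj_eq_noise_expansion[OF y, of pen lam n \<beta>0] sum_pen_eq_l0[OF lam pen reg0]
    unfolding E_def by (simp add: mat_vec_def)
  have A2: "(norm2 n (mat_vec p X (\<lambda>j. b j - \<beta>0 j)) / sqrt (real n))\<^sup>2 = W / real n"
    unfolding W_def by (simp add: power_divide norm2_sq)
  have "(E - 2 * Z + W) / (2 * real n) = E / (2 * real n) - Z / real n + W / real n / 2"
    using n by (simp add: field_simps)
  moreover have "(real (l0 p \<beta>0) - real (l0 p b)) * lam\<^sup>2 / 2
      = real (l0 p \<beta>0) * lam\<^sup>2 / 2 - real (l0 p b) * lam\<^sup>2 / 2"
    by (simp add: left_diff_distrib diff_divide_distrib)
  ultimately show ?thesis
    using Q unfolding Qb Qb0 A2 Z_def[symmetric] by linarith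
qed

lemma card_Un_eq_card_add_card_Diff:
  assumes "finite A" "finite B"
  shows "card (A \<union> B) = card B + card (A - B)"
proof -
  have "card (B \<union> (A - B)) = card B + card (A - B)"
    using assms by (intro card_Un_disjoint) auto
  moreover have "B \<union> (A - B) = A \<union> B" by auto
  ultimately show ?thesis by simp
qed

lemma card_diff_eq_card_Diff_diff:
  assumes "finite A" "finite B"
  shows "real (card B) - real (card A) = real (card (B - A)) - real (card (A - B))"
proof -
  have "card A = card (A \<inter> B) + card (A - B)" and "card B = card (A \<inter> B) + card (B - A)"
    using assms by (metis Int_commute card_Int_Diff)+
  then show ?thesis by simp
qed

lemma supp_eq_of_basic_inequality:
  fixes b \<beta>0 z :: "nat \<Rightarrow> real" and p :: nat
  defines "\<delta> \<equiv> \<lambda>j. b j - \<beta>0 j" and "s \<equiv> l0 p \<beta>0"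
  assumes n: "n > 0" and c: "c > 0" and la0: "la0 \<ge> 0"
    and spark: "c * norm2 p \<delta> \<le> norm2 n (mat_vec p X \<delta>) / sqrt (real n)"
    and basic: "(norm2 n (mat_vec p X \<delta>) / sqrt (real n))\<^sup>2 / 2
      \<le> (\<Sum>j<p. \<delta> j * z j) / real n + (real s - real (l0 p b)) * lam\<^sup>2 / 2"
    and z: "\<forall>j<p. \<bar>z j\<bar> \<le> real n * la0"
    and lam_lower: "la0 * sqrt (2 * real s + 1) / c < lam"
    and beta_min: "\<forall>j\<in>supp p \<beta>0. 4 / c * (la0 * sqrt (2 * real s + 1) / c) < \<bar>\<beta>0 j\<bar>"
    and lam_upper: "\<forall>j\<in>supp p \<beta>0. lam\<^sup>2 < (\<beta>0 j)\<^sup>2 * c\<^sup>2 / 2"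
  shows "supp p b = supp p \<beta>0"
proof -
  define S0 where "S0 = supp p \<beta>0"
  define T where "T = supp p b"
  define D where "D = norm2 p \<delta>"
  define k where "k = card (T - S0)"
  define m where "m = card (S0 - T)"
  have finS0: "finite S0" and finT: "finite T" unfolding S0_def T_def by (auto simp: finite_supp)
  have S0p: "S0 \<subseteq> {..<p}" and Tp: "T \<subseteq> {..<p}" unfolding S0_def T_def by (auto simp: supp_subset)
  have D0: "D \<ge> 0" unfolding D_def by (rule norm2_nonneg)
  have cardU: "card (T \<union> S0) = s + k"
    unfolding s_def l0_def S0_def[symmetric] k_def using finT finS0 by (rule card_Un_eq_card_add_card_Diff)
  have card_diff: "real s - real (l0 p b) = real m - real k"
    unfolding s_def l0_def S0_def[symmetric] T_def[symmetric] k_def m_def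
    using finT finS0 by (rule card_diff_eq_card_Diff_diff)
  have H: "c\<^sup>2 * D\<^sup>2 / 2 \<le> la0 * sqrt (real s + real k) * D + (real m - real k) * lam\<^sup>2 / 2"
  proof -
    have "(\<Sum>j<p. \<delta> j * z j) \<le> real n * la0 * sqrt (real (card (T \<union> S0))) * D"
      unfolding D_def
      by (rule sum_mult_le_sqrt_card_norm2) (use Tp S0p z n la0 in \<open>auto simp: \<delta>_def T_def S0_def supp_def\<close>)
    then have Zb: "(\<Sum>j<p. \<delta> j * z j) / real n \<le> la0 * sqrt (real s + real k) * D"
      using n by (simp add: cardU field_simps)
    have "(c * D)\<^sup>2 \<le> (norm2 n (mat_vec p X \<delta>) / sqrt (real n))\<^sup>2"
      using spark c D0 unfolding D_def by (intro power_mono) auto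
    then have "c\<^sup>2 * D\<^sup>2 / 2 \<le> (norm2 n (mat_vec p X \<delta>) / sqrt (real n))\<^sup>2 / 2"
      by (simp add: power_mult_distrib)
    then show ?thesis using basic[unfolded card_diff] Zb by linarith
  qed
  have Dsq: "(\<Sum>j\<in>S0 - T. (\<beta>0 j)\<^sup>2) \<le> D\<^sup>2"
  proof -
    have "(\<Sum>j\<in>S0 - T. (\<beta>0 j)\<^sup>2) = (\<Sum>j\<in>S0 - T. (\<delta> j)\<^sup>2)"
      by (intro sum.cong) (auto simp: \<delta>_def T_def S0_def supp_def)
    also have "\<dots> \<le> (\<Sum>j<p. (\<delta> j)\<^sup>2)" using S0p by (intro sum_mono2) auto
    finally show ?thesis unfolding D_def norm2_sq .
  qed
  have M1: "real m * lam\<^sup>2 / 2 < c\<^sup>2 * D\<^sup>2 / 4" if "m > 0"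
  proof -
    have ne: "S0 - T \<noteq> {}" using that unfolding m_def by (metis card.empty less_irrefl)
    have "real m * lam\<^sup>2 = (\<Sum>j\<in>S0 - T. lam\<^sup>2)" unfolding m_def by simp
    also have "\<dots> < (\<Sum>j\<in>S0 - T. (\<beta>0 j)\<^sup>2 * c\<^sup>2 / 2)"
      using ne finS0 lam_upper unfolding S0_def by (intro sum_strict_mono) auto
    also have "\<dots> = (\<Sum>j\<in>S0 - T. (\<beta>0 j)\<^sup>2) * c\<^sup>2 / 2" by (simp add: sum_distrib_right sum_divide_distrib)
    also have "\<dots> \<le> D\<^sup>2 * c\<^sup>2 / 2" using Dsq by (intro divide_right_mono mult_right_mono) auto
    finally show ?thesis by (simp add: mult_ac)
  qed
  have M2: "la0 * sqrt (2 * real s + 1) < c\<^sup>2 * D / 4" if m: "m > 0"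
  proof -
    obtain j where j: "j \<in> S0 - T" using m unfolding m_def by (metis card.empty ex_in_conv less_irrefl)
    have "(\<beta>0 j)\<^sup>2 \<le> (\<Sum>j\<in>S0 - T. (\<beta>0 j)\<^sup>2)" using j finS0 by (intro member_le_sum) auto
    then have "\<bar>\<beta>0 j\<bar> \<le> D" using Dsq D0 by (metis abs_le_square_iff abs_of_nonneg order_trans)
    moreover have "4 / c * (la0 * sqrt (2 * real s + 1) / c) < \<bar>\<beta>0 j\<bar>" using beta_min j S0_def by auto
    ultimately have "4 / c * (la0 * sqrt (2 * real s + 1) / c) < D" by linarith
    then show ?thesis using c by (simp add: field_simps power2_eq_square)
  qed
  have L: "la0\<^sup>2 * (2 * real s + 1) < lam\<^sup>2 * c\<^sup>2"
  proof -
    have "la0 * sqrt (2 * real s + 1) < lam * c" using lam_lower c by (simp add: pos_divide_less_eq)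
    then have "(la0 * sqrt (2 * real s + 1))\<^sup>2 < (lam * c)\<^sup>2" using la0 by (intro power_strict_mono) auto
    then show ?thesis by (simp add: power_mult_distrib)
  qed
  have "m \<le> s" unfolding m_def s_def l0_def S0_def[symmetric] using finS0 by (intro card_mono) auto
  then have m: "m = 0" using no_false_negatives_arith[OF c la0 D0 _ _ H L M1 M2] by blast
  then have "c\<^sup>2 * D\<^sup>2 / 2 \<le> la0 * sqrt (real s + real k) * D - real k * lam\<^sup>2 / 2"
    using H by simp
  then have "k = 0" by (rule no_false_positives_arith[OF c _ L])
  with m have "m = 0 \<and> k = 0" by simp
  then show ?thesis using finT finS0 unfolding k_def m_def T_def[symmetric] S0_def[symmetric] by auto
qed

lemma prediction_estimation_bound:
  fixes b \<beta>0 z :: "nat \<Rightarrow> real" and p :: nat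
  defines "\<delta> \<equiv> \<lambda>j. b j - \<beta>0 j" and "s \<equiv> real (l0 p \<beta>0)"
  assumes n: "n > 0" and c: "c > 0" and la1: "la1 \<ge> 0"
    and supp: "supp p b = supp p \<beta>0"
    and spark: "c * norm2 p \<delta> \<le> norm2 n (mat_vec p X \<delta>) / sqrt (real n)"
    and basic: "(norm2 n (mat_vec p X \<delta>) / sqrt (real n))\<^sup>2 / 2 \<le> (\<Sum>j<p. \<delta> j * z j) / real n"
    and z: "\<forall>j\<in>supp p \<beta>0. \<bar>z j\<bar> \<le> real n * la1"
  shows "norm2 n (mat_vec p X \<delta>) / sqrt (real n) \<le> 2 * la1 * sqrt s / c"
    and "norm2 p \<delta> \<le> 2 * la1 * sqrt s / c\<^sup>2"
proof -
  define A where "A = norm2 n (mat_vec p X \<delta>) / sqrt (real n)"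
  define D where "D = norm2 p \<delta>"
  have A0: "A \<ge> 0" unfolding A_def by (simp add: norm2_nonneg)
  have s0: "s \<ge> 0" unfolding s_def by simp
  have "c * D \<le> A" using spark unfolding A_def D_def .
  then have DA: "D \<le> A / c" using c by (simp add: pos_le_divide_eq mult.commute)
  have "(\<Sum>j<p. \<delta> j * z j) \<le> real n * la1 * sqrt s * D"
    unfolding D_def s_def l0_def
    by (rule sum_mult_le_sqrt_card_norm2)
       (use supp z n la1 in \<open>auto simp: \<delta>_def supp_def supp_subset\<close>)
  then have "(\<Sum>j<p. \<delta> j * z j) / real n \<le> la1 * sqrt s * D"
    using n by (simp add: pos_divide_le_eq mult_ac)
  then have "A\<^sup>2 / 2 \<le> la1 * sqrt s * D" using basic unfolding A_def by linarith
  also have "\<dots> \<le> la1 * sqrt s * (A / c)"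
    using DA s0 la1 by (intro mult_left_mono) auto
  finally have "A\<^sup>2 / 2 \<le> la1 * sqrt s * (A / c)" .
  then show A: "norm2 n (mat_vec p X \<delta>) / sqrt (real n) \<le> 2 * la1 * sqrt s / c"
    using A0 c la1 s0 unfolding A_def[symmetric]
    by (cases "A = 0") (auto simp: power2_eq_square field_simps)
  from DA have "D \<le> A / c" .
  also have "\<dots> \<le> (2 * la1 * sqrt s / c) / c" using A c s0 unfolding A_def by (intro divide_right_mono) auto
  finally show "norm2 p \<delta> \<le> 2 * la1 * sqrt s / c\<^sup>2" unfolding D_def by (simp add: power2_eq_square)
qed

lemma is_global_min_recovery:
  fixes b \<beta>0 \<epsilon> :: "nat \<Rightarrow> real" and p :: nat
  defines "s \<equiv> l0 p \<beta>0"
  assumes n: "n > 0" and c: "c > 0" and lam: "lam > 0" and la0: "la0 \<ge> 0" and la1: "la1 \<ge> 0"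
    and col: "\<forall>j<p. (\<Sum>i<n. (X i j)\<^sup>2) = real n"
    and sparse: "real s < real M / 2" and M: "M = rspark c n p X"
    and noise0: "\<forall>j<p. \<bar>\<Sum>i<n. X i j * \<epsilon> i\<bar> \<le> real n * la0"
    and noise1: "\<forall>j\<in>supp p \<beta>0. \<bar>\<Sum>i<n. X i j * \<epsilon> i\<bar> \<le> real n * la1"
    and lam_lower: "la0 * sqrt (2 * real s + 1) / c < lam"
    and beta_min: "\<forall>j\<in>supp p \<beta>0. 4 / c * (la0 * sqrt (2 * real s + 1) / c) < \<bar>\<beta>0 j\<bar>"
    and lam_upper: "\<forall>j\<in>supp p \<beta>0. lam < \<bar>\<beta>0 j\<bar> * min 1 (sqrt (c\<^sup>2 / 2))"
    and pen: "pen \<in> {pen_H, pen_H0}"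
    and y: "y = (\<lambda>i. mat_vec p X \<beta>0 i + \<epsilon> i)"
    and gm: "is_global_min pen lam n p M X y b"
  shows "supp p b = supp p \<beta>0
    \<and> norm2 n (mat_vec p X (\<lambda>j. b j - \<beta>0 j)) / sqrt (real n) \<le> 2 * la1 * sqrt (real s) / c
    \<and> norm2 p (\<lambda>j. b j - \<beta>0 j) \<le> 2 * la1 * sqrt (real s) / c\<^sup>2"
proof -
  have lam_beta: "lam < \<bar>\<beta>0 j\<bar>" and lam_sq: "lam\<^sup>2 < (\<beta>0 j)\<^sup>2 * c\<^sup>2 / 2" if "j \<in> supp p \<beta>0" for j
  proof -
    have u: "lam < \<bar>\<beta>0 j\<bar> * min 1 (sqrt (c\<^sup>2 / 2))" using lam_upper that by auto
    have "\<bar>\<beta>0 j\<bar> * min 1 (sqrt (c\<^sup>2 / 2)) \<le> \<bar>\<beta>0 j\<bar> * 1" by (intro mult_left_mono) auto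
    then show "lam < \<bar>\<beta>0 j\<bar>" using u by simp
    have "\<bar>\<beta>0 j\<bar> * min 1 (sqrt (c\<^sup>2 / 2)) \<le> \<bar>\<beta>0 j\<bar> * sqrt (c\<^sup>2 / 2)"
      by (intro mult_left_mono) auto
    then have "lam < \<bar>\<beta>0 j\<bar> * sqrt (c\<^sup>2 / 2)" using u by simp
    then have "lam\<^sup>2 < (\<bar>\<beta>0 j\<bar> * sqrt (c\<^sup>2 / 2))\<^sup>2" using lam by (intro power_strict_mono) auto
    then show "lam\<^sup>2 < (\<beta>0 j)\<^sup>2 * c\<^sup>2 / 2" by (simp add: power_mult_distrib)
  qed
  have reg0: "\<forall>j<p. \<beta>0 j \<noteq> 0 \<longrightarrow> lam \<le> \<bar>\<beta>0 j\<bar>"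
    using lam_beta unfolding supp_def by (auto intro: less_imp_le)
  have recovery: "supp p b' = supp p \<beta>0
    \<and> norm2 n (mat_vec p X (\<lambda>j. b' j - \<beta>0 j)) / sqrt (real n) \<le> 2 * la1 * sqrt (real s) / c
    \<and> norm2 p (\<lambda>j. b' j - \<beta>0 j) \<le> 2 * la1 * sqrt (real s) / c\<^sup>2"
    if gm': "is_global_min pen lam n p M X y b'"
      and reg: "pen = pen_H \<Longrightarrow> \<forall>j<p. b' j \<noteq> 0 \<longrightarrow> lam \<le> \<bar>b' j\<bar>" for b'
  proof -
    have "\<beta>0 \<in> S_set p M" using sparse unfolding S_set_def s_def by simp
    then have basic: "(norm2 n (mat_vec p X (\<lambda>j. b' j - \<beta>0 j)) / sqrt (real n))\<^sup>2 / 2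
      \<le> (\<Sum>j<p. (b' j - \<beta>0 j) * (\<Sum>i<n. X i j * \<epsilon> i)) / real n
        + (real s - real (l0 p b')) * lam\<^sup>2 / 2"
      unfolding s_def
      by (intro Qobj_basic_inequality[OF n lam pen y reg] reg0 is_global_minD[OF gm'])
    have "real (l0 p b') < real M / 2" using gm' unfolding is_global_min_def S_set_def by simp
    then have "l0 p b' + s < rspark c n p X" using sparse M by linarith
    then have spark: "c * norm2 p (\<lambda>j. b' j - \<beta>0 j)
        \<le> norm2 n (mat_vec p X (\<lambda>j. b' j - \<beta>0 j)) / sqrt (real n)"
      unfolding s_def by (rule rspark_norm2_diff_lower)
    have supp: "supp p b' = supp p \<beta>0"
      by (rule supp_eq_of_basic_inequality[OF n c la0 spark _ noise0])
         (use basic lam_lower beta_min lam_sq in \<open>auto simp: s_def\<close>)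
    then have "l0 p b' = s" unfolding l0_def s_def by simp
    then show ?thesis
      using supp prediction_estimation_bound[OF n c la1 supp spark _ noise1] basic
      unfolding s_def by simp
  qed
  have "\<forall>j<p. b j \<noteq> 0 \<longrightarrow> lam \<le> \<bar>b j\<bar>" if "pen = pen_H"
    using is_global_min_pen_H_nonzero_ge[OF n lam col, of M y "supp p \<beta>0" b] recovery gm that
    by simp
  then show ?thesis using recovery[OF gm] by simp
qed

lemma normq_le_of_norm2_le:
  fixes x :: "nat \<Rightarrow> real"
  assumes S: "S \<subseteq> {..<p}" and zero: "\<And>j. j < p \<Longrightarrow> j \<notin> S \<Longrightarrow> x j = 0"
    and q: "1 \<le> q" "q \<le> 2" and bound: "norm2 p x \<le> K * sqrt (real (card S))"
  shows "normq q p x \<le> K * real (card S) powr (1 / q)"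
proof -
  have "normq q p x \<le> real (card S) powr (1/q - 1/2) * norm2 p x"
    by (rule normq_le_card_powr_norm2[OF S zero q])
  also have "\<dots> \<le> real (card S) powr (1/q - 1/2) * (K * sqrt (real (card S)))"
    using bound by (intro mult_left_mono) auto
  also have "\<dots> = K * real (card S) powr (1 / q)"
    by (cases "card S = 0") (simp_all add: powr_half_sqrt[symmetric] powr_add[symmetric])
  finally show ?thesis .
qed

lemma estimation_bounds_of_supp_eq:
  fixes b \<beta>0 :: "nat \<Rightarrow> real"
  assumes supp: "supp p b = supp p \<beta>0"
    and bound: "norm2 p (\<lambda>j. b j - \<beta>0 j) \<le> K * sqrt (real (l0 p \<beta>0))"
  shows "1 \<le> q \<Longrightarrow> q \<le> 2 \<Longrightarrow> normq q p (\<lambda>j. b j - \<beta>0 j) \<le> K * real (l0 p \<beta>0) powr (1 / q)"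
    and "j < p \<Longrightarrow> \<bar>b j - \<beta>0 j\<bar> \<le> K * sqrt (real (l0 p \<beta>0))"
proof -
  have zero: "b j - \<beta>0 j = 0" if "j < p" "j \<notin> supp p \<beta>0" for j
  proof -
    have "j \<notin> supp p b" using that supp by simp
    then show ?thesis using that by (simp add: supp_def)
  qed
  show "normq q p (\<lambda>j. b j - \<beta>0 j) \<le> K * real (l0 p \<beta>0) powr (1 / q)" if "1 \<le> q" "q \<le> 2"
    using bound unfolding l0_def by (intro normq_le_of_norm2_le[OF supp_subset zero that])
  show "\<bar>b j - \<beta>0 j\<bar> \<le> K * sqrt (real (l0 p \<beta>0))" if "j < p"
    using abs_le_norm2[OF that, of "\<lambda>j. b j - \<beta>0 j"] bound by linarith
qed

lemma recovery_fixed_n: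
  fixes X :: "nat \<Rightarrow> nat \<Rightarrow> real" and \<beta>0 :: "nat \<Rightarrow> real" and p n :: nat
    and lam \<sigma> c c2 c2' :: real
  defines "s \<equiv> real (l0 p \<beta>0)" and "pt \<equiv> real (max n p)"
  assumes sig: "\<sigma> > 0" and c: "c > 0" and c2: "c2 > 0" and c2': "c2' > 0" and n2: "n \<ge> 2"
    and design: "\<forall>j<p. norm2 n (\<lambda>i. X i j) = sqrt (real n)"
    and sparse: "s < real (rspark c n p X) / 2"
    and beta_min: "\<forall>j \<in> supp p \<beta>0.
        \<bar>\<beta>0 j\<bar> > max (sqrt (16 / c\<^sup>2)) 1 * (c2 / c) * sqrt ((2 * s + 1) * ln pt / real n)"
    and lam_lower: "(c2 / c) * sqrt ((2 * s + 1) * ln pt / real n) < lam"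
    and lam_upper: "\<forall>j \<in> supp p \<beta>0. lam < \<bar>\<beta>0 j\<bar> * min 1 (sqrt (c\<^sup>2 / 2))"
    and pen: "pen \<in> {pen_H, pen_H0}"
  shows "\<exists>E \<in> sets (noise \<sigma> n).
      measure (noise \<sigma> n) E \<ge>
        1 - sqrt (2 / pi) / c2 * \<sigma> * ln pt powr (-1/2) * pt powr (1 - c2\<^sup>2 / (2 * \<sigma>\<^sup>2))
          - sqrt (2 / pi) / c2' * \<sigma> * s * ln (real n) powr (-1/2)
              * real n powr (- (c2'\<^sup>2) / (2 * \<sigma>\<^sup>2))
      \<and> (\<forall>\<epsilon> \<in> E. \<forall>b.
           is_global_min pen lam n p (rspark c n p X) X (\<lambda>i. mat_vec p X \<beta>0 i + \<epsilon> i) b \<longrightarrow>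
           supp p b = supp p \<beta>0
           \<and> norm2 n (mat_vec p X (\<lambda>j. b j - \<beta>0 j)) / sqrt (real n)
               \<le> 2 * c2' / c * sqrt (s * ln (real n) / real n)
           \<and> (\<forall>q. 1 \<le> q \<and> q \<le> 2 \<longrightarrow>
               normq q p (\<lambda>j. b j - \<beta>0 j)
                 \<le> 2 / c\<^sup>2 * c2' * s powr (1 / q) * sqrt (ln (real n) / real n))
           \<and> (\<forall>j < p. \<bar>b j - \<beta>0 j\<bar> \<le> 2 / c\<^sup>2 * c2' * sqrt s * sqrt (ln (real n) / real n)))"
proof -
  define la0 where "la0 = c2 * sqrt (ln pt / real n)"
  define la1 where "la1 = c2' * sqrt (ln (real n) / real n)"
  define K where "K = 2 / c\<^sup>2 * c2' * sqrt (ln (real n) / real n)"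
  have n: "n > 0" and lnpt: "ln pt > 0" and lnn: "ln (real n) > 0" using n2 by (auto simp: pt_def)
  have la0: "la0 \<ge> 0" and la1: "la1 \<ge> 0" unfolding la0_def la1_def using c2 c2' lnpt lnn by auto
  have col: "\<forall>j<p. (\<Sum>i<n. (X i j)\<^sup>2) = real n"
  proof (intro allI impI)
    fix j assume "j < p"
    then have "(norm2 n (\<lambda>i. X i j))\<^sup>2 = (sqrt (real n))\<^sup>2" using design by simp
    then show "(\<Sum>i<n. (X i j)\<^sup>2) = real n" by (simp add: norm2_sq)
  qed
  obtain E where E: "E \<in> sets (noise \<sigma> n)"
    and noise: "\<forall>\<epsilon>\<in>E. (\<forall>j<p. \<bar>\<Sum>i<n. X i j * \<epsilon> i\<bar> \<le> real n * la0)
      \<and> (\<forall>j\<in>supp p \<beta>0. \<bar>\<Sum>i<n. X i j * \<epsilon> i\<bar> \<le> real n * la1)"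
    and prob: "measure (noise \<sigma> n) E \<ge>
      1 - sqrt (2 / pi) / c2 * \<sigma> * ln pt powr (-1/2) * pt powr (1 - c2\<^sup>2 / (2 * \<sigma>\<^sup>2))
        - sqrt (2 / pi) / c2' * \<sigma> * s * ln (real n) powr (-1/2)
            * real n powr (- (c2'\<^sup>2) / (2 * \<sigma>\<^sup>2))"
    using noise_good_event[OF sig c2 c2' n2 col supp_subset[of p \<beta>0]]
    unfolding la0_def la1_def pt_def s_def l0_def by blast
  have scale: "la0 * sqrt (2 * s + 1) / c = (c2 / c) * sqrt ((2 * s + 1) * ln pt / real n)"
    unfolding la0_def by (simp add: real_sqrt_mult[symmetric])
  have lam_gt: "la0 * sqrt (2 * s + 1) / c < lam" unfolding scale by (rule lam_lower)
  have threshold_nonneg: "0 \<le> la0 * sqrt (2 * s + 1) / c" using la0 c by (simp add: s_def)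
  then have lam: "lam > 0" using lam_gt by linarith
  have beta_min': "\<forall>j\<in>supp p \<beta>0. 4 / c * (la0 * sqrt (2 * s + 1) / c) < \<bar>\<beta>0 j\<bar>"
  proof
    fix j assume "j \<in> supp p \<beta>0"
    have "sqrt (16 / c\<^sup>2) = 4 / c" using c by (simp add: real_sqrt_divide)
    then have "4 / c * (la0 * sqrt (2 * s + 1) / c)
        \<le> max (sqrt (16 / c\<^sup>2)) 1 * (la0 * sqrt (2 * s + 1) / c)"
      using threshold_nonneg by (intro mult_right_mono) auto
    also have "\<dots> < \<bar>\<beta>0 j\<bar>" using beta_min \<open>j \<in> supp p \<beta>0\<close> unfolding scale by (simp add: mult.assoc)
    finally show "4 / c * (la0 * sqrt (2 * s + 1) / c) < \<bar>\<beta>0 j\<bar>" .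
  qed
  show ?thesis
  proof (intro bexI[OF _ E] conjI prob ballI allI impI)
    fix \<epsilon> b
    assume "\<epsilon> \<in> E" and gm: "is_global_min pen lam n p (rspark c n p X) X (\<lambda>i. mat_vec p X \<beta>0 i + \<epsilon> i) b"
    then have "(\<forall>j<p. \<bar>\<Sum>i<n. X i j * \<epsilon> i\<bar> \<le> real n * la0)
      \<and> (\<forall>j\<in>supp p \<beta>0. \<bar>\<Sum>i<n. X i j * \<epsilon> i\<bar> \<le> real n * la1)"
      using noise by blast
    then have rec: "supp p b = supp p \<beta>0
      \<and> norm2 n (mat_vec p X (\<lambda>j. b j - \<beta>0 j)) / sqrt (real n) \<le> 2 * la1 * sqrt s / c
      \<and> norm2 p (\<lambda>j. b j - \<beta>0 j) \<le> 2 * la1 * sqrt s / c\<^sup>2"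
      using is_global_min_recovery[OF n c lam la0 la1 col _ refl _ _ _ _ lam_upper pen refl gm]
        lam_gt beta_min' sparse
      unfolding s_def by blast
    then have D: "norm2 p (\<lambda>j. b j - \<beta>0 j) \<le> K * sqrt s" unfolding K_def la1_def by simp
    from rec show "supp p b = supp p \<beta>0" by simp
    show "norm2 n (mat_vec p X (\<lambda>j. b j - \<beta>0 j)) / sqrt (real n)
        \<le> 2 * c2' / c * sqrt (s * ln (real n) / real n)"
    proof -
      have "sqrt (s * ln (real n) / real n) = sqrt s * sqrt (ln (real n) / real n)"
        by (simp add: real_sqrt_mult[symmetric])
      then show ?thesis using rec unfolding la1_def by (simp add: mult_ac)
    qed
    show "normq q p (\<lambda>j. b j - \<beta>0 j)
        \<le> 2 / c\<^sup>2 * c2' * s powr (1 / q) * sqrt (ln (real n) / real n)"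
      if "1 \<le> q \<and> q \<le> 2" for q :: real
      using estimation_bounds_of_supp_eq(1)[of p b \<beta>0 K q] rec D that
      unfolding K_def s_def by (simp add: mult_ac)
    show "\<bar>b j - \<beta>0 j\<bar> \<le> 2 / c\<^sup>2 * c2' * sqrt s * sqrt (ln (real n) / real n)"
      if "j < p" for j
      using estimation_bounds_of_supp_eq(2)[of p b \<beta>0 K j] rec D that
      unfolding K_def s_def by (simp add: mult_ac)
  qed
qed

theorem theorem1:
  fixes p :: "nat \<Rightarrow> nat" and X :: "nat \<Rightarrow> nat \<Rightarrow> nat \<Rightarrow> real"
    and \<beta>0 :: "nat \<Rightarrow> nat \<Rightarrow> real" and lam :: "nat \<Rightarrow> real"
    and \<sigma> c c2 :: real
  assumes sigma_pos: "\<sigma> > 0"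
    and c_pos: "c > 0"
    and c2_ge: "c2 \<ge> sqrt 10 * \<sigma>"
    and s_small_o: "(\<lambda>n. real (l0 (p n) (\<beta>0 n))) \<in> o(\<lambda>n. real n)"
    and design: "\<forall>\<^sub>F n in sequentially.
        (\<forall>j<p n. norm2 n (\<lambda>i. X n i j) = sqrt (real n))"
    and sparse: "\<forall>\<^sub>F n in sequentially.
        real (l0 (p n) (\<beta>0 n)) < real (rspark c n (p n) (X n)) / 2"
    and beta_min: "\<forall>\<^sub>F n in sequentially. \<forall>j \<in> supp (p n) (\<beta>0 n).
        \<bar>\<beta>0 n j\<bar> > max (sqrt (16 / c\<^sup>2)) 1 * (c2 / c) *
          sqrt ((2 * real (l0 (p n) (\<beta>0 n)) + 1) * ln (real (max n (p n))) / real n)"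
    and lambda_lower: "\<forall>\<^sub>F n in sequentially.
        (c2 / c) * sqrt ((2 * real (l0 (p n) (\<beta>0 n)) + 1) * ln (real (max n (p n))) / real n)
          < lam n"
    and lambda_upper: "\<forall>\<^sub>F n in sequentially. \<forall>j \<in> supp (p n) (\<beta>0 n).
        lam n < \<bar>\<beta>0 n j\<bar> * min 1 (sqrt (c\<^sup>2 / 2))"
  shows "\<forall>pen \<in> {pen_H, pen_H0}. \<exists>c2'. c2' \<ge> sqrt 2 * \<sigma> \<and>
    (\<forall>\<^sub>F n in sequentially.
      (let s = real (l0 (p n) (\<beta>0 n)); pt = real (max n (p n)); M = rspark c n (p n) (X n) in
       \<exists>E \<in> sets (noise \<sigma> n).
         measure (noise \<sigma> n) E \<ge>
           1 - sqrt (2 / pi) / c2 * \<sigma> * ln pt powr (-1/2) * pt powr (1 - c2\<^sup>2 / (2 * \<sigma>\<^sup>2))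
             - sqrt (2 / pi) / c2' * \<sigma> * s * ln (real n) powr (-1/2)
                 * real n powr (- (c2'\<^sup>2) / (2 * \<sigma>\<^sup>2))
         \<and> (\<forall>\<epsilon> \<in> E. \<forall>b.
              is_global_min pen (lam n) n (p n) M (X n)
                (\<lambda>i. mat_vec (p n) (X n) (\<beta>0 n) i + \<epsilon> i) b \<longrightarrow>
              supp (p n) b = supp (p n) (\<beta>0 n)
              \<and> norm2 n (mat_vec (p n) (X n) (\<lambda>j. b j - \<beta>0 n j)) / sqrt (real n)
                  \<le> 2 * c2' / c * sqrt (s * ln (real n) / real n)
              \<and> (\<forall>q. 1 \<le> q \<and> q \<le> 2 \<longrightarrow>
                  normq q (p n) (\<lambda>j. b j - \<beta>0 n j)
                    \<le> 2 / c\<^sup>2 * c2' * s powr (1 / q) * sqrt (ln (real n) / real n))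
              \<and> (\<forall>j < p n. \<bar>b j - \<beta>0 n j\<bar>
                    \<le> 2 / c\<^sup>2 * c2' * sqrt s * sqrt (ln (real n) / real n)))))"
proof -
  have "0 < sqrt 10 * \<sigma>" using sigma_pos by simp
  with c2_ge have c2: "c2 > 0" by linarith
  have c2': "sqrt 2 * \<sigma> > 0" using sigma_pos by simp
  show ?thesis
    unfolding Let_def
    apply (intro ballI exI[of _ "sqrt 2 * \<sigma>"] conjI order_refl)
    using eventually_ge_at_top[of 2] design sparse beta_min lambda_lower lambda_upper
    apply eventually_elim
    by (rule recovery_fixed_n[OF sigma_pos c_pos c2 c2'])
qed

end
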